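(* Suppose $n$ is an odd integer with $1\leq n<\min\{t_1,t_2,t_3\}$. Then the $\mathfrak{BI}$-module $\mathscr M_n$ is isomorphic to $W\oplus W$, where $W=E_n\big(k_2+k_3+\tfrac{n+1}{2},\,-k_1-k_3-\tfrac{n+1}{2},\,k_1+k_2+\tfrac{n+1}{2}\big)$. Moreover, if $k_1,k_2,k_3\geq 0$, then $W$ is irreducible and is isomorphic to $E_n\big(k_2+k_3+\tfrac{n+1}{2},\,k_1+k_3+\tfrac{n+1}{2},\,k_1+k_2+\tfrac{n+1}{2}\big)$.
   Context: Fix real numbers $k_1,k_2,k_3$. For $i=1,2,3$ let $R_i$ be the operator on functions on $\mathbb R^3$ replacing $x_i$ by $-x_i$, and let $T_i$ be the Dunkl operator $T_if=\frac{\partial f}{\partial x_i}+k_i\frac{f-R_if}{x_i}$. Let $\sigma_1=\begin{pmatrix}0&1\\1&0\end{pmatrix}$, $\sigma_2=\begin{pmatrix}0&-\sqrt{-1}\\ \sqrt{-1}&0\end{pmatrix}$, $\sigma_3=\begin{pmatrix}1&0\\0&-1\end{pmatrix}$, and let $e_i$ act on $\mathbb C^2$ by $\sigma_i$. Tensor products are over $\mathbb R$; $\mathbb R[x_1,x_2,x_3]_n$ denotes homogeneous polynomials of degree $n$. Let $\mathbf D=e_1\otimes T_1+e_2\otimes T_2+e_3\otimes T_3$ and $\mathscr M_n=\ker(\mathbf D|_{\mathbb C^2\otimes\mathbb R[x_1,x_2,x_3]_n})$. For $i=1,2,3$ set $t_i=-2k_i$ if $2k_i$ is an odd negative integer, and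 $t_i=\infty$ otherwise. The universal Bannai–Ito algebra $\mathfrak{BI}$ is the unital associative $\mathbb C$-algebra generated by $X,Y,Z$ with relations saying that $\kappa=\{X,Y\}-Z$, $\lambda=\{Y,Z\}-X$, $\mu=\{Z,X\}-Y$ commute with $X,Y,Z$ (here $\{A,B\}=AB+BA$). $\mathscr M_n$ is a $\mathfrak{BI}$-module via $X=(\sqrt{-1}\,e_1\otimes(x_3T_2-x_2T_3)+\tfrac12)R_2R_3+k_2R_3+k_3R_2$, $Y=(\sqrt{-1}\,e_2\otimes(x_1T_3-x_3T_1)+\tfrac12)R_1R_3+k_3R_1+k_1R_3$, $Z=(\sqrt{-1}\,e_3\otimes(x_2T_1-x_1T_2)+\tfrac12)R_1R_2+k_1R_2+k_2R_1$, with operators composed right to left and $R_i$ acting on the polynomial factor. For $a,b,c\in\mathbb C$ and odd $d\geq1$, $E_d(a,b,c)$ is the $\mathfrak{BI}$-module $\mathbb C^{d+1}$ in which, w.r.t. a basis $v_0,\dots,v_d$, $X$ acts by the lower bidiagonal matrix with diagonal $(\theta_0,\dots,\theta_d)$ and all subdiagonal entries $1$, $Y$ acts by the upper bidiagonal matrix with diagonal $(\theta^*_0,\dots,\theta^*_d)$ and superdiagonal $(\varphi_1,\dots,\varphi_d)$, and $Z=\{X,Y\}-\big(c^2-a^2-b^2+\frac{(d+1)^2}{4}\big)$, where $\theta_i=\frac{(-1)^i(2a-d+2i)}{2}$, $\theta^*_i=\frac{(-1)^i(2b-d+2i)}{2}$, $\varphi_i=i(d-i+1)$ for $i$ even and $\varphi_i=c^2-\frac{(2a+2b-d+2i-1)^2}{4}$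 for $i$ odd. *)

theory Defs
  imports Complex_Main "HOL-Library.Extended_Real"
begin

text \<open>A monomial x1^a x2^b x3^c is encoded by its exponent triple (a,b,c).
  A polynomial with complex coefficients is its (finitely supported) coefficient
  function.  An element of C^2 (tensor over R) R[x1,x2,x3] is a C^2-valued polynomial,
  encoded as a function on bool \<times> monomials: component False is the first
  coordinate of C^2, component True the second.\<close>

type_synonym mono = "nat \<times> nat \<times> nat"
type_synonym cpoly = "mono \<Rightarrow> complex"
type_synonym spoly = "bool \<times> mono \<Rightarrow> complex"

fun expo :: "nat \<Rightarrow> mono \<Rightarrow> nat" where
  "expo i (a, b, c) = (if i = 1 then a else if i = 2 then b else c)"

fun bump :: "nat \<Rightarrow> mono \<Rightarrow> mono" where
  "bump i (a, b, c) = (if i = 1 then (a + 1, b, c) else if i = 2 then (a, b + 1, c) else (a, b, c + 1))"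

fun lower :: "nat \<Rightarrow> mono \<Rightarrow> mono" where
  "lower i (a, b, c) = (if i = 1 then (a - 1, b, c) else if i = 2 then (a, b - 1, c) else (a, b, c - 1))"

fun mdeg :: "mono \<Rightarrow> nat" where
  "mdeg (a, b, c) = a + b + c"

definition pR :: "nat \<Rightarrow> cpoly \<Rightarrow> cpoly" where
  "pR i p = (\<lambda>\<alpha>. (-1) ^ expo i \<alpha> * p \<alpha>)"

definition pX :: "nat \<Rightarrow> cpoly \<Rightarrow> cpoly" where
  "pX i p = (\<lambda>\<alpha>. if expo i \<alpha> = 0 then 0 else p (lower i \<alpha>))"

definition pD :: "nat \<Rightarrow> cpoly \<Rightarrow> cpoly" where
  "pD i p = (\<lambda>\<alpha>. of_nat (expo i \<alpha> + 1) * p (bump i \<alpha>))"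

text \<open>Division by x_i (exact on polynomials divisible by x_i, such as f - R_i f).\<close>
definition pdivX :: "nat \<Rightarrow> cpoly \<Rightarrow> cpoly" where
  "pdivX i q = (\<lambda>\<alpha>. q (bump i \<alpha>))"

definition kap :: "real \<Rightarrow> real \<Rightarrow> real \<Rightarrow> nat \<Rightarrow> real" where
  "kap k1 k2 k3 i = (if i = 1 then k1 else if i = 2 then k2 else k3)"

definition dunkl :: "(nat \<Rightarrow> real) \<Rightarrow> nat \<Rightarrow> cpoly \<Rightarrow> cpoly" where
  "dunkl k i p = (\<lambda>\<alpha>. pD i p \<alpha> + complex_of_real (k i) * pdivX i (\<lambda>\<beta>. p \<beta> - pR i p \<beta>) \<alpha>)"

definition sp :: "(cpoly \<Rightarrow> cpoly) \<Rightarrow> spoly \<Rightarrow> spoly" where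
  "sp Op F = (\<lambda>(j, \<alpha>). Op (\<lambda>\<beta>. F (j, \<beta>)) \<alpha>)"

text \<open>e_i acting on C^2 by the Pauli matrix sigma_i.\<close>
definition pauli :: "nat \<Rightarrow> spoly \<Rightarrow> spoly" where
  "pauli i F = (\<lambda>(j, \<alpha>).
     if i = 1 then F (\<not> j, \<alpha>)
     else if i = 2 then (if j then \<i> * F (False, \<alpha>) else - \<i> * F (True, \<alpha>))
     else (if j then - F (True, \<alpha>) else F (False, \<alpha>)))"

definition Dirac :: "(nat \<Rightarrow> real) \<Rightarrow> spoly \<Rightarrow> spoly" where
  "Dirac k F = (\<lambda>x. (\<Sum>i\<in>{1,2,3::nat}. pauli i (sp (dunkl k i) F) x))"

definition Mspace :: "real \<Rightarrow> real \<Rightarrow> real \<Rightarrow> nat \<Rightarrow> spoly set" where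
  "Mspace k1 k2 k3 n = {F. (\<forall>j \<alpha>. mdeg \<alpha> \<noteq> n \<longrightarrow> F (j, \<alpha>) = 0) \<and> Dirac (kap k1 k2 k3) F = (\<lambda>_. 0)}"

datatype BIgen = GX | GY | GZ

definition angm :: "(nat \<Rightarrow> real) \<Rightarrow> nat \<Rightarrow> nat \<Rightarrow> cpoly \<Rightarrow> cpoly" where
  "angm k l j p = (\<lambda>\<alpha>. pX l (dunkl k j p) \<alpha> - pX j (dunkl k l p) \<alpha>)"

definition genop :: "(nat \<Rightarrow> real) \<Rightarrow> nat \<Rightarrow> nat \<Rightarrow> nat \<Rightarrow> spoly \<Rightarrow> spoly" where
  "genop k i j l F =
    (let G = sp (pR j) (sp (pR l) F) in
     (\<lambda>x. \<i> * pauli i (sp (angm k l j) G) x + G x / 2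
          + complex_of_real (k j) * sp (pR l) F x + complex_of_real (k l) * sp (pR j) F x))"

definition Mact :: "real \<Rightarrow> real \<Rightarrow> real \<Rightarrow> BIgen \<Rightarrow> spoly \<Rightarrow> spoly" where
  "Mact k1 k2 k3 g = (case g of
      GX \<Rightarrow> genop (kap k1 k2 k3) 1 2 3
    | GY \<Rightarrow> genop (kap k1 k2 k3) 2 3 1
    | GZ \<Rightarrow> genop (kap k1 k2 k3) 3 1 2)"

definition Eth :: "nat \<Rightarrow> complex \<Rightarrow> nat \<Rightarrow> complex" where
  "Eth d a i = (-1) ^ i * (2 * a - of_nat d + 2 * of_nat i) / 2"

definition Eph :: "nat \<Rightarrow> complex \<Rightarrow> complex \<Rightarrow> complex \<Rightarrow> nat \<Rightarrow> complex" where
  "Eph d a b c i = (if even i then of_nat (i * (d - i + 1))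
                    else c ^ 2 - (2 * a + 2 * b - of_nat d + 2 * of_nat i - 1) ^ 2 / 4)"

text \<open>Matrix entries (row r, column s) w.r.t. the basis v_0..v_d.\<close>
definition EXm :: "nat \<Rightarrow> complex \<Rightarrow> nat \<Rightarrow> nat \<Rightarrow> complex" where
  "EXm d a r s = (if r = s then Eth d a r else if r = s + 1 then 1 else 0)"

definition EYm :: "nat \<Rightarrow> complex \<Rightarrow> complex \<Rightarrow> complex \<Rightarrow> nat \<Rightarrow> nat \<Rightarrow> complex" where
  "EYm d a b c r s = (if r = s then Eth d b r else if s = r + 1 then Eph d a b c s else 0)"

definition matact :: "nat \<Rightarrow> (nat \<Rightarrow> nat \<Rightarrow> complex) \<Rightarrow> (nat \<Rightarrow> complex) \<Rightarrow> (nat \<Rightarrow> complex)" where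
  "matact d M v = (\<lambda>r. if r \<le> d then (\<Sum>s\<le>d. M r s * v s) else 0)"

text \<open>C^{d+1} as coordinate vectors indexed by 0..d.\<close>
definition Ecar :: "nat \<Rightarrow> (nat \<Rightarrow> complex) set" where
  "Ecar d = {v. \<forall>r>d. v r = 0}"

definition Eact :: "nat \<Rightarrow> complex \<Rightarrow> complex \<Rightarrow> complex \<Rightarrow> BIgen \<Rightarrow> (nat \<Rightarrow> complex) \<Rightarrow> (nat \<Rightarrow> complex)" where
  "Eact d a b c g = (case g of
      GX \<Rightarrow> matact d (EXm d a)
    | GY \<Rightarrow> matact d (EYm d a b c)
    | GZ \<Rightarrow> (\<lambda>v r. matact d (EXm d a) (matact d (EYm d a b c) v) r
                  + matact d (EYm d a b c) (matact d (EXm d a) v) r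
                  - (c ^ 2 - a ^ 2 - b ^ 2 + (of_nat d + 1) ^ 2 / 4) * v r))"

definition dsum_car :: "('a \<Rightarrow> complex) set \<Rightarrow> ('b \<Rightarrow> complex) set \<Rightarrow> ('a + 'b \<Rightarrow> complex) set" where
  "dsum_car V U = {f. (\<lambda>a. f (Inl a)) \<in> V \<and> (\<lambda>b. f (Inr b)) \<in> U}"

definition dsum_act :: "(BIgen \<Rightarrow> ('a \<Rightarrow> complex) \<Rightarrow> ('a \<Rightarrow> complex)) \<Rightarrow> (BIgen \<Rightarrow> ('b \<Rightarrow> complex) \<Rightarrow> ('b \<Rightarrow> complex))
    \<Rightarrow> BIgen \<Rightarrow> ('a + 'b \<Rightarrow> complex) \<Rightarrow> ('a + 'b \<Rightarrow> complex)" where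
  "dsum_act A B g f = (\<lambda>x. case x of
      Inl a \<Rightarrow> A g (\<lambda>a'. f (Inl a')) a
    | Inr b \<Rightarrow> B g (\<lambda>b'. f (Inr b')) b)"

definition bi_iso :: "('a \<Rightarrow> complex) set \<Rightarrow> (BIgen \<Rightarrow> ('a \<Rightarrow> complex) \<Rightarrow> ('a \<Rightarrow> complex))
    \<Rightarrow> ('b \<Rightarrow> complex) set \<Rightarrow> (BIgen \<Rightarrow> ('b \<Rightarrow> complex) \<Rightarrow> ('b \<Rightarrow> complex)) \<Rightarrow> bool" where
  "bi_iso V A U B \<longleftrightarrow> (\<exists>\<Phi>. bij_betw \<Phi> V U
     \<and> (\<forall>u\<in>V. \<forall>v\<in>V. \<Phi> (\<lambda>x. u x + v x) = (\<lambda>y. \<Phi> u y + \<Phi> v y))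
     \<and> (\<forall>c. \<forall>u\<in>V. \<Phi> (\<lambda>x. c * u x) = (\<lambda>y. c * \<Phi> u y))
     \<and> (\<forall>g. \<forall>u\<in>V. \<Phi> (A g u) = B g (\<Phi> u)))"

definition bi_irreducible :: "('a \<Rightarrow> complex) set \<Rightarrow> (BIgen \<Rightarrow> ('a \<Rightarrow> complex) \<Rightarrow> ('a \<Rightarrow> complex)) \<Rightarrow> bool" where
  "bi_irreducible V A \<longleftrightarrow> V \<noteq> {\<lambda>_. 0} \<and>
     (\<forall>S. S \<subseteq> V \<and> (\<lambda>_. 0) \<in> S
          \<and> (\<forall>u\<in>S. \<forall>v\<in>S. (\<lambda>x. u x + v x) \<in> S)
          \<and> (\<forall>c. \<forall>u\<in>S. (\<lambda>x. c * u x) \<in> S)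
          \<and> (\<forall>g. \<forall>u\<in>S. A g u \<in> S)
        \<longrightarrow> S = {\<lambda>_. 0} \<or> S = V)"

definition tval :: "real \<Rightarrow> ereal" where
  "tval k = (if \<exists>m::int. odd m \<and> m < 0 \<and> 2 * k = real_of_int m then ereal (- 2 * k) else \<infinity>)"

end

theory Submission
  imports Defs
begin

text \<open>An element \<open>F\<close> of \<open>M\<^sub>n\<close> is determined by its coefficients on the plane \<open>x\<^sub>3 = 0\<close>: the Dirac
  equation expresses the coefficients of \<open>x\<^sub>3\<^bsup>c+1\<^esup>\<close> through those of \<open>x\<^sub>3\<^bsup>c\<^esup>\<close> divided by
  \<open>[c + 1]\<^sub>k\<^sub>3\<close>, which is nonzero for \<open>c < n < t\<^sub>3\<close>, and every choice on the plane extends. So \<open>M\<^sub>n\<close>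
  is parametrised by two vectors in \<open>\<complex>\<^bsup>n+1\<^esup>\<close>. On the plane, \<open>X\<close>, \<open>Y\<close> and \<open>Z\<close> act on each of
  them by the same recursions, which after a diagonal rescaling (possible as
  \<open>[m]\<^sub>k\<^sub>1 \<noteq> 0\<close> for \<open>m \<le> n < t\<^sub>1\<close>) are the matrices of \<open>W = E\<^sub>n(a, b, c)\<close>; hence \<open>M\<^sub>n \<cong> W \<oplus> W\<close>.

  For \<open>k\<^sub>i \<ge> 0\<close>, a lower triangular matrix with binomial-Pochhammer entries and nonzero diagonal
  intertwines \<open>E\<^sub>n(a, b, c)\<close> with \<open>E\<^sub>n(a, -b, c)\<close>. On \<open>E\<^sub>n(a, b, c)\<close>, \<open>Y\<close> is upper bidiagonal with
  distinct eigenvalues \<open>\<theta>\<^sup>*\<^sub>i\<close>, so a nonzero submodule contains a \<open>\<theta>\<^sup>*\<^sub>n\<close>-eigenvector; the intertwiner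
  sends it to a \<open>\<theta>\<^sup>*\<^sub>0\<close>-eigenvector of \<open>E\<^sub>n(a, -b, c)\<close>, i.e. a multiple of \<open>v\<^sub>0\<close>, and \<open>v\<^sub>0\<close> generates
  everything under \<open>X\<close>. Hence \<open>W\<close> is irreducible.\<close>

section \<open>Dunkl and Dirac operators in coordinates\<close>

text \<open>\<open>T\<^sub>i x\<^sub>i\<^sup>m = [m]\<^sub>k\<^sub>i x\<^sub>i\<^bsup>m-1\<^esup>\<close> with \<open>[m]\<^sub>\<kappa> = dunkl_coeff \<kappa> m\<close>.\<close>

definition dunkl_coeff :: "real \<Rightarrow> nat \<Rightarrow> complex" where
  "dunkl_coeff \<kappa> m = of_nat m + complex_of_real \<kappa> * (1 - (-1) ^ m)"

lemma dunkl_coeff_0 [simp]: "dunkl_coeff \<kappa> 0 = 0"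
  by (simp add: dunkl_coeff_def)

text \<open>\<open>[m]\<^sub>\<kappa>\<close> vanishes only for odd \<open>m = -2\<kappa>\<close>, which is what \<open>tval \<kappa>\<close> excludes.\<close>

lemma dunkl_coeff_nonzero:
  assumes "0 < m" "ereal (real m) < tval \<kappa>"
  shows "dunkl_coeff \<kappa> m \<noteq> 0"
proof
  assume zero: "dunkl_coeff \<kappa> m = 0"
  then have "odd m"
    using assms(1) by (auto simp: dunkl_coeff_def)
  with zero have "complex_of_real (real m + 2 * \<kappa>) = 0"
    by (simp add: dunkl_coeff_def mult.commute)
  then have \<kappa>: "2 * \<kappa> = - real m"
    by (simp only: of_real_eq_0_iff)
  with \<open>odd m\<close> assms(1) have "tval \<kappa> = ereal (real m)"
    unfolding tval_def by (subst if_P) (auto intro!: exI[of _ "- int m"])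
  with assms(2) show False
    by simp
qed

lemma expo_bump [simp]: "expo i (bump i \<alpha>) = Suc (expo i \<alpha>)"
  by (cases \<alpha>) auto

lemma dunkl_apply: "dunkl k i p \<alpha> = dunkl_coeff (k i) (Suc (expo i \<alpha>)) * p (bump i \<alpha>)"
  unfolding dunkl_def pD_def pdivX_def pR_def dunkl_coeff_def
  by (simp add: algebra_simps)

lemma Dirac_apply_False:
  "Dirac k F (False, (a, b, c)) = dunkl_coeff (k 1) (Suc a) * F (True, (Suc a, b, c))
     - \<i> * dunkl_coeff (k 2) (Suc b) * F (True, (a, Suc b, c))
     + dunkl_coeff (k 3) (Suc c) * F (False, (a, b, Suc c))"
  unfolding Dirac_def pauli_def sp_def by (simp add: dunkl_apply)

lemma Dirac_apply_True:
  "Dirac k F (True, (a, b, c)) = dunkl_coeff (k 1) (Suc a) * F (False, (Suc a, b, c))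
     + \<i> * dunkl_coeff (k 2) (Suc b) * F (False, (a, Suc b, c))
     - dunkl_coeff (k 3) (Suc c) * F (True, (a, b, Suc c))"
  unfolding Dirac_def pauli_def sp_def by (simp add: dunkl_apply)

lemma kap_simps [simp]:
  "kap k1 k2 k3 1 = k1" "kap k1 k2 k3 (Suc 0) = k1" "kap k1 k2 k3 2 = k2" "kap k1 k2 k3 3 = k3"
  by (simp_all add: kap_def)

lemmas genop_unfolds = genop_def Let_def pauli_def sp_def angm_def pX_def pR_def

section \<open>The generators on the plane \<open>x\<^sub>3 = 0\<close>\<close>

text \<open>On the plane \<open>x\<^sub>3 = 0\<close> the term \<open>x\<^sub>3 T\<^sub>2\<close> of \<open>X\<close> (and \<open>x\<^sub>3 T\<^sub>1\<close> of \<open>Y\<close>) drops out, and the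
  Dirac equation trades the remaining \<open>T\<^sub>3\<close>-term for \<open>T\<^sub>1\<close>- and \<open>T\<^sub>2\<close>-terms. \<open>Z\<close> involves no \<open>T\<^sub>3\<close>.\<close>

definition X_diag :: "(nat \<Rightarrow> real) \<Rightarrow> nat \<Rightarrow> complex" where
  "X_diag k b = (-1) ^ b * (dunkl_coeff (k 2) b + 1/2 + complex_of_real (k 3)) + complex_of_real (k 2)"

definition Y_diag :: "(nat \<Rightarrow> real) \<Rightarrow> nat \<Rightarrow> complex" where
  "Y_diag k a = (-1) ^ a * (dunkl_coeff (k 1) a + 1/2 + complex_of_real (k 3)) + complex_of_real (k 1)"

definition Z_diag :: "(nat \<Rightarrow> real) \<Rightarrow> nat \<Rightarrow> nat \<Rightarrow> complex" where
  "Z_diag k a b = (-1) ^ (a + b) / 2 + complex_of_real (k 1) * (-1) ^ b + complex_of_real (k 2) * (-1) ^ a"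

lemma Mact_X_plane_False:
  assumes "Dirac (kap k1 k2 k3) F = (\<lambda>_. 0)"
  shows "Mact k1 k2 k3 GX F (False, (a, Suc b, 0)) = X_diag (kap k1 k2 k3) (Suc b) * F (False, (a, Suc b, 0))
          + \<i> * (-1) ^ b * dunkl_coeff k1 (Suc a) * F (False, (Suc a, b, 0))"
proof -
  have "Mact k1 k2 k3 GX F (False, (a, Suc b, 0)) - (X_diag (kap k1 k2 k3) (Suc b) * F (False, (a, Suc b, 0))
          + \<i> * (-1) ^ b * dunkl_coeff k1 (Suc a) * F (False, (Suc a, b, 0)))
        = - \<i> * (-1) ^ b * Dirac (kap k1 k2 k3) F (True, (a, b, 0))"
    unfolding Dirac_apply_True Mact_def genop_unfolds X_diag_def by (simp add: dunkl_apply algebra_simps)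
  then show ?thesis
    using assms by simp
qed

lemma Mact_X_plane_True:
  assumes "Dirac (kap k1 k2 k3) F = (\<lambda>_. 0)"
  shows "Mact k1 k2 k3 GX F (True, (a, Suc b, 0)) = X_diag (kap k1 k2 k3) (Suc b) * F (True, (a, Suc b, 0))
          - \<i> * (-1) ^ b * dunkl_coeff k1 (Suc a) * F (True, (Suc a, b, 0))"
proof -
  have "Mact k1 k2 k3 GX F (True, (a, Suc b, 0)) - (X_diag (kap k1 k2 k3) (Suc b) * F (True, (a, Suc b, 0))
          - \<i> * (-1) ^ b * dunkl_coeff k1 (Suc a) * F (True, (Suc a, b, 0)))
        = \<i> * (-1) ^ b * Dirac (kap k1 k2 k3) F (False, (a, b, 0))"
    unfolding Dirac_apply_False Mact_def genop_unfolds X_diag_def by (simp add: dunkl_apply algebra_simps)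
  then show ?thesis
    using assms by simp
qed

lemma Mact_X_axis: "Mact k1 k2 k3 GX F (j, (a, 0, 0)) = X_diag (kap k1 k2 k3) 0 * F (j, (a, 0, 0))"
  unfolding Mact_def genop_unfolds X_diag_def by (cases j) (simp_all add: dunkl_apply algebra_simps)

lemma Mact_Y_plane_False:
  assumes "Dirac (kap k1 k2 k3) F = (\<lambda>_. 0)"
  shows "Mact k1 k2 k3 GY F (False, (Suc a, b, 0)) = Y_diag (kap k1 k2 k3) (Suc a) * F (False, (Suc a, b, 0))
          - \<i> * (-1) ^ a * dunkl_coeff k2 (Suc b) * F (False, (a, Suc b, 0))"
proof -
  have "Mact k1 k2 k3 GY F (False, (Suc a, b, 0)) - (Y_diag (kap k1 k2 k3) (Suc a) * F (False, (Suc a, b, 0))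
          - \<i> * (-1) ^ a * dunkl_coeff k2 (Suc b) * F (False, (a, Suc b, 0)))
        = (-1) ^ a * Dirac (kap k1 k2 k3) F (True, (a, b, 0))"
    unfolding Dirac_apply_True Mact_def genop_unfolds Y_diag_def by (simp add: dunkl_apply algebra_simps)
  then show ?thesis
    using assms by simp
qed

lemma Mact_Y_plane_True:
  assumes "Dirac (kap k1 k2 k3) F = (\<lambda>_. 0)"
  shows "Mact k1 k2 k3 GY F (True, (Suc a, b, 0)) = Y_diag (kap k1 k2 k3) (Suc a) * F (True, (Suc a, b, 0))
          + \<i> * (-1) ^ a * dunkl_coeff k2 (Suc b) * F (True, (a, Suc b, 0))"
proof -
  have "Mact k1 k2 k3 GY F (True, (Suc a, b, 0)) - (Y_diag (kap k1 k2 k3) (Suc a) * F (True, (Suc a, b, 0))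
          + \<i> * (-1) ^ a * dunkl_coeff k2 (Suc b) * F (True, (a, Suc b, 0)))
        = (-1) ^ a * Dirac (kap k1 k2 k3) F (False, (a, b, 0))"
    unfolding Dirac_apply_False Mact_def genop_unfolds Y_diag_def by (simp add: dunkl_apply algebra_simps)
  then show ?thesis
    using assms by simp
qed

lemma Mact_Y_axis: "Mact k1 k2 k3 GY F (j, (0, b, 0)) = Y_diag (kap k1 k2 k3) 0 * F (j, (0, b, 0))"
  unfolding Mact_def genop_unfolds Y_diag_def by (cases j) (simp_all add: dunkl_apply algebra_simps)

lemma Mact_Z_plane_False:
  "Mact k1 k2 k3 GZ F (False, (a, b, 0)) = Z_diag (kap k1 k2 k3) a b * F (False, (a, b, 0))
     + (if a = 0 then 0 else \<i> * (-1) ^ (a - 1 + b) * dunkl_coeff k2 (Suc b) * F (False, (a - 1, Suc b, 0)))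
     - (if b = 0 then 0 else \<i> * (-1) ^ (a + b - 1) * dunkl_coeff k1 (Suc a) * F (False, (Suc a, b - 1, 0)))"
  unfolding Mact_def genop_unfolds Z_diag_def
  by (cases a; cases b) (simp_all add: dunkl_apply algebra_simps power_add)

lemma Mact_Z_plane_True:
  "Mact k1 k2 k3 GZ F (True, (a, b, 0)) = Z_diag (kap k1 k2 k3) a b * F (True, (a, b, 0))
     - (if a = 0 then 0 else \<i> * (-1) ^ (a - 1 + b) * dunkl_coeff k2 (Suc b) * F (True, (a - 1, Suc b, 0)))
     + (if b = 0 then 0 else \<i> * (-1) ^ (a + b - 1) * dunkl_coeff k1 (Suc a) * F (True, (Suc a, b - 1, 0)))"
  unfolding Mact_def genop_unfolds Z_diag_def
  by (cases a; cases b) (simp_all add: dunkl_apply algebra_simps power_add)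

text \<open>The sign twist in \<open>slice_snd\<close> makes both slices transform by the same operators.\<close>

definition slice_fst :: "nat \<Rightarrow> spoly \<Rightarrow> nat \<Rightarrow> complex" where
  "slice_fst n F s = F (False, (n - s, s, 0))"

definition slice_snd :: "nat \<Rightarrow> spoly \<Rightarrow> nat \<Rightarrow> complex" where
  "slice_snd n F s = (-1) ^ s * F (True, (n - s, s, 0))"

definition slice_X :: "real \<Rightarrow> real \<Rightarrow> real \<Rightarrow> nat \<Rightarrow> (nat \<Rightarrow> complex) \<Rightarrow> nat \<Rightarrow> complex" where
  "slice_X k1 k2 k3 n P r = X_diag (kap k1 k2 k3) r * P r
     + (if r = 0 then 0 else \<i> * (-1) ^ (r - 1) * dunkl_coeff k1 (Suc (n - r)) * P (r - 1))"

definition slice_Y :: "real \<Rightarrow> real \<Rightarrow> real \<Rightarrow> nat \<Rightarrow> (nat \<Rightarrow> complex) \<Rightarrow> nat \<Rightarrow> complex" where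
  "slice_Y k1 k2 k3 n P r = Y_diag (kap k1 k2 k3) (n - r) * P r
     - (if r < n then \<i> * (-1) ^ (n - r - 1) * dunkl_coeff k2 (Suc r) * P (Suc r) else 0)"

definition slice_Z :: "real \<Rightarrow> real \<Rightarrow> real \<Rightarrow> nat \<Rightarrow> (nat \<Rightarrow> complex) \<Rightarrow> nat \<Rightarrow> complex" where
  "slice_Z k1 k2 k3 n P r = Z_diag (kap k1 k2 k3) (n - r) r * P r
     + (if r < n then \<i> * dunkl_coeff k2 (Suc r) * P (Suc r) else 0)
     - (if r = 0 then 0 else \<i> * dunkl_coeff k1 (Suc (n - r)) * P (r - 1))"

lemma slice_fst_X:
  assumes "Dirac (kap k1 k2 k3) F = (\<lambda>_. 0)" "r \<le> n"
  shows "slice_fst n (Mact k1 k2 k3 GX F) r = slice_X k1 k2 k3 n (slice_fst n F) r"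
proof (cases r)
  case (Suc m)
  with assms(2) have "Suc (n - Suc m) = n - m" by simp
  with Suc show ?thesis
    using Mact_X_plane_False[OF assms(1), of "n - Suc m" m]
    by (simp add: slice_fst_def slice_X_def)
qed (use Mact_X_axis[of k1 k2 k3 F False n] in \<open>simp add: slice_fst_def slice_X_def\<close>)

lemma slice_snd_X:
  assumes "Dirac (kap k1 k2 k3) F = (\<lambda>_. 0)" "r \<le> n"
  shows "slice_snd n (Mact k1 k2 k3 GX F) r = slice_X k1 k2 k3 n (slice_snd n F) r"
proof (cases r)
  case (Suc m)
  with assms(2) have "Suc (n - Suc m) = n - m" by simp
  with Suc show ?thesis
    unfolding slice_snd_def slice_X_def
    by (simp add: Mact_X_plane_True[OF assms(1)] algebra_simps)
qed (use Mact_X_axis[of k1 k2 k3 F True n] in \<open>simp add: slice_snd_def slice_X_def\<close>)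

lemma slice_fst_Y:
  assumes "Dirac (kap k1 k2 k3) F = (\<lambda>_. 0)" "r \<le> n"
  shows "slice_fst n (Mact k1 k2 k3 GY F) r = slice_Y k1 k2 k3 n (slice_fst n F) r"
proof (cases "r < n")
  case True
  then have "Suc (n - Suc r) = n - r" "n - r - 1 = n - Suc r" by auto
  with True show ?thesis
    using Mact_Y_plane_False[OF assms(1), of "n - Suc r" r]
    by (simp add: slice_fst_def slice_Y_def)
next
  case False
  with assms(2) show ?thesis
    using Mact_Y_axis[of k1 k2 k3 F False n] by (simp add: slice_fst_def slice_Y_def)
qed

lemma slice_snd_Y:
  assumes "Dirac (kap k1 k2 k3) F = (\<lambda>_. 0)" "r \<le> n"
  shows "slice_snd n (Mact k1 k2 k3 GY F) r = slice_Y k1 k2 k3 n (slice_snd n F) r"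
proof (cases "r < n")
  case True
  then have "Suc (n - Suc r) = n - r" "n - r - 1 = n - Suc r" by auto
  with True show ?thesis
    using Mact_Y_plane_True[OF assms(1), of "n - Suc r" r]
    by (simp add: slice_snd_def slice_Y_def algebra_simps)
next
  case False
  with assms(2) show ?thesis
    using Mact_Y_axis[of k1 k2 k3 F True n] by (simp add: slice_snd_def slice_Y_def)
qed

lemma slice_fst_Z:
  assumes "odd n" "r \<le> n"
  shows "slice_fst n (Mact k1 k2 k3 GZ F) r = slice_Z k1 k2 k3 n (slice_fst n F) r"
proof -
  have "(-1::complex) ^ (n - 1) = 1"
    using assms(1) by simp
  moreover have "n - r - 1 + r = n - 1" if "r < n"
    using that by simp
  moreover have "n - r + r - 1 = n - 1" "Suc (n - r) = n - (r - 1)" if "0 < r"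
    using that assms(2) by auto
  ultimately show ?thesis
    using assms(2) Mact_Z_plane_False[of k1 k2 k3 F "n - r" r]
    by (auto simp: slice_fst_def slice_Z_def diff_diff_add)
qed

lemma slice_snd_Z:
  assumes "odd n" "r \<le> n"
  shows "slice_snd n (Mact k1 k2 k3 GZ F) r = slice_Z k1 k2 k3 n (slice_snd n F) r"
proof -
  have "(-1::complex) ^ (n - 1) = 1"
    using assms(1) by simp
  moreover have "n - r - 1 + r = n - 1" if "r < n"
    using that by simp
  moreover have "n - r + r - 1 = n - 1" "Suc (n - r) = n - (r - 1)" if "0 < r"
    using that assms(2) by auto
  ultimately have Z: "Mact k1 k2 k3 GZ F (True, (n - r, r, 0)) = Z_diag (kap k1 k2 k3) (n - r) r * F (True, (n - r, r, 0))
      - (if r < n then \<i> * dunkl_coeff k2 (Suc r) * F (True, (n - Suc r, Suc r, 0)) else 0)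
      + (if r = 0 then 0 else \<i> * dunkl_coeff k1 (Suc (n - r)) * F (True, (n - (r - 1), r - 1, 0)))"
    using assms(2) Mact_Z_plane_True[of k1 k2 k3 F "n - r" r] by (auto simp: diff_diff_add)
  have "slice_snd n F (Suc r) = - ((-1) ^ r * F (True, (n - Suc r, Suc r, 0)))"
    by (simp add: slice_snd_def)
  moreover have "slice_snd n F (r - 1) = - ((-1) ^ r * F (True, (n - (r - 1), r - 1, 0)))" if "0 < r"
    using that by (cases r) (simp_all add: slice_snd_def)
  ultimately show ?thesis
    unfolding slice_snd_def[of n "Mact k1 k2 k3 GZ F"] slice_Z_def Z
    by (auto simp: slice_snd_def algebra_simps)
qed

section \<open>The matrices of \<open>W\<close>\<close>

lemma matact_EXm:
  assumes "r \<le> d"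
  shows "matact d (EXm d a) v r = Eth d a r * v r + (if r = 0 then 0 else v (r - 1))"
proof -
  have "(\<Sum>s\<le>d. EXm d a r s * v s)
      = (\<Sum>s\<le>d. (if s = r then Eth d a r * v s else 0) + (if s = r - 1 \<and> r \<noteq> 0 then v s else 0))"
    by (rule sum.cong) (auto simp: EXm_def)
  with assms show ?thesis
    by (auto simp: matact_def sum.distrib)
qed

lemma matact_EYm:
  assumes "r \<le> d"
  shows "matact d (EYm d a b c) v r = Eth d b r * v r + (if r < d then Eph d a b c (Suc r) * v (Suc r) else 0)"
proof -
  have "(\<Sum>s\<le>d. EYm d a b c r s * v s)
      = (\<Sum>s\<le>d. (if s = r then Eth d b r * v s else 0) + (if s = Suc r then Eph d a b c (Suc r) * v s else 0))"
    by (rule sum.cong) (auto simp: EYm_def)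
  with assms show ?thesis
    by (simp add: matact_def sum.distrib)
qed

lemma Eact_Z_apply:
  assumes "r \<le> d"
  shows "Eact d a b c GZ v r =
    (if r = 0 then 0 else (Eth d b (r - 1) + Eth d b r) * v (r - 1))
    + (2 * Eth d a r * Eth d b r + (if r = 0 then 0 else Eph d a b c r) + (if r < d then Eph d a b c (Suc r) else 0)
        - (c ^ 2 - a ^ 2 - b ^ 2 + (of_nat d + 1) ^ 2 / 4)) * v r
    + (if r < d then Eph d a b c (Suc r) * (Eth d a r + Eth d a (Suc r)) * v (Suc r) else 0)"
  using assms unfolding Eact_def BIgen.case
  by (cases r) (auto simp: matact_EXm matact_EYm algebra_simps)

definition W_a :: "real \<Rightarrow> real \<Rightarrow> real \<Rightarrow> nat \<Rightarrow> complex" where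
  "W_a k1 k2 k3 n = complex_of_real (k2 + k3 + (real n + 1) / 2)"

definition W_b :: "real \<Rightarrow> real \<Rightarrow> real \<Rightarrow> nat \<Rightarrow> complex" where
  "W_b k1 k2 k3 n = complex_of_real (- k1 - k3 - (real n + 1) / 2)"

definition W_c :: "real \<Rightarrow> real \<Rightarrow> real \<Rightarrow> nat \<Rightarrow> complex" where
  "W_c k1 k2 k3 n = complex_of_real (k1 + k2 + (real n + 1) / 2)"

lemma Eth_W_a: "Eth n (W_a k1 k2 k3 n) r = (-1) ^ r * (complex_of_real (k2 + k3) + 1/2 + of_nat r)"
  unfolding Eth_def W_a_def by (simp add: field_simps)

lemma Eth_W_b:
  "r \<le> n \<Longrightarrow> Eth n (W_b k1 k2 k3 n) r = (-1) ^ r * (of_nat r - complex_of_real (k1 + k3) - 1/2 - of_nat n)"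
  unfolding Eth_def W_b_def by (simp add: field_simps)

lemma Eth_W_a_Suc_sum: "Eth n (W_a k1 k2 k3 n) r + Eth n (W_a k1 k2 k3 n) (Suc r) = - ((-1) ^ r)"
  by (simp add: Eth_W_a algebra_simps)

lemma Eth_W_b_Suc_sum:
  "Suc r \<le> n \<Longrightarrow> Eth n (W_b k1 k2 k3 n) r + Eth n (W_b k1 k2 k3 n) (Suc r) = - ((-1) ^ r)"
  by (simp add: Eth_W_b algebra_simps)

lemma X_diag_eq_Eth: "X_diag (kap k1 k2 k3) r = Eth n (W_a k1 k2 k3 n) r"
  unfolding Eth_W_a X_diag_def dunkl_coeff_def
  by (cases "even r") (simp_all add: algebra_simps)

lemma Y_diag_eq_Eth:
  assumes "odd n" "r \<le> n"
  shows "Y_diag (kap k1 k2 k3) (n - r) = Eth n (W_b k1 k2 k3 n) r"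
proof -
  have "(-1::complex) ^ (n - r) = - ((-1) ^ r)" "even (n - r) \<longleftrightarrow> odd r"
    using assms by (cases "even r"; auto)+
  then show ?thesis
    unfolding Eth_W_b[OF assms(2)] Y_diag_def dunkl_coeff_def
    using assms by (cases "even r") (simp_all add: algebra_simps of_nat_diff)
qed

lemma Eph_W:
  assumes "odd n" "r < n"
  shows "Eph n (W_a k1 k2 k3 n) (W_b k1 k2 k3 n) (W_c k1 k2 k3 n) (Suc r)
       = dunkl_coeff k1 (n - r) * dunkl_coeff k2 (Suc r)"
proof (cases "even r")
  case True
  then have "odd (n - r)" "odd (Suc r)"
    using assms by auto
  with assms show ?thesis
    unfolding Eph_def dunkl_coeff_def W_a_def W_b_def W_c_def
    by (simp add: of_nat_diff power2_eq_square field_simps)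
next
  case False
  then have "even (n - r)" "even (Suc r)" "n - Suc r + 1 = n - r"
    using assms by auto
  then have "Suc r * (n - Suc r + 1) = Suc r * (n - r)"
    by presburger
  with \<open>even (n - r)\<close> \<open>even (Suc r)\<close> show ?thesis
    unfolding Eph_def dunkl_coeff_def by (simp only: if_True of_nat_mult) (simp add: of_nat_diff)
qed

lemma Z_diag_eq_Eth_Eph:
  assumes "odd n" "r \<le> n"
  shows "Z_diag (kap k1 k2 k3) (n - r) r = 2 * Eth n (W_a k1 k2 k3 n) r * Eth n (W_b k1 k2 k3 n) r
     + dunkl_coeff k1 (Suc (n - r)) * dunkl_coeff k2 r + dunkl_coeff k1 (n - r) * dunkl_coeff k2 (Suc r)
     - ((W_c k1 k2 k3 n)\<^sup>2 - (W_a k1 k2 k3 n)\<^sup>2 - (W_b k1 k2 k3 n)\<^sup>2 + (of_nat n + 1)\<^sup>2 / 4)"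
proof -
  have "even (n - r) \<longleftrightarrow> odd r" "odd (n - r + r)"
    using assms by auto
  with assms show ?thesis
    unfolding Eth_W_a Eth_W_b[OF assms(2)] unfolding Z_diag_def dunkl_coeff_def W_a_def W_b_def W_c_def
    by (cases "even r") (simp_all add: of_nat_diff power2_eq_square field_simps)
qed

section \<open>The isomorphism \<open>M\<^sub>n \<cong> W \<oplus> W\<close>\<close>

text \<open>The diagonal change of basis that absorbs the factors \<open>\<i> (-1)\<^sup>r [n - r]\<^sub>k\<^sub>1\<close> off the diagonal
  of \<open>slice_X\<close>, turning the slice operators into the matrices of \<open>E\<^sub>n\<close>.\<close>

primrec gauge :: "real \<Rightarrow> nat \<Rightarrow> nat \<Rightarrow> complex" where
  "gauge k1 n 0 = 1"
| "gauge k1 n (Suc r) = gauge k1 n r / (\<i> * (-1) ^ r * dunkl_coeff k1 (n - r))"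

definition rescale :: "nat \<Rightarrow> (nat \<Rightarrow> complex) \<Rightarrow> (nat \<Rightarrow> complex) \<Rightarrow> nat \<Rightarrow> complex" where
  "rescale n g P = (\<lambda>r. if r \<le> n then g r * P r else 0)"

lemma gauge_eq_gauge_Suc:
  "dunkl_coeff k1 (n - r) \<noteq> 0 \<Longrightarrow> gauge k1 n r = gauge k1 n (Suc r) * (\<i> * (-1) ^ r * dunkl_coeff k1 (n - r))"
  by simp

lemma gauge_nonzero: "(\<And>t. t < r \<Longrightarrow> dunkl_coeff k1 (n - t) \<noteq> 0) \<Longrightarrow> gauge k1 n r \<noteq> 0"
  by (induction r) auto

lemma rescale_slice_X:
  assumes "\<And>r. r < n \<Longrightarrow> dunkl_coeff k1 (n - r) \<noteq> 0"
  shows "rescale n (gauge k1 n) (slice_X k1 k2 k3 n P) = matact n (EXm n (W_a k1 k2 k3 n)) (rescale n (gauge k1 n) P)"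
proof
  fix r
  show "rescale n (gauge k1 n) (slice_X k1 k2 k3 n P) r = matact n (EXm n (W_a k1 k2 k3 n)) (rescale n (gauge k1 n) P) r"
  proof (cases "r \<le> n")
    case True
    show ?thesis
    proof (cases r)
      case (Suc m)
      with True have "gauge k1 n m = gauge k1 n (Suc m) * (\<i> * (-1) ^ m * dunkl_coeff k1 (n - m))"
        using assms[of m] by (intro gauge_eq_gauge_Suc) simp
      moreover from Suc True have "Suc (n - r) = n - m"
        by simp
      ultimately show ?thesis
        using Suc True
        by (simp add: rescale_def slice_X_def matact_EXm X_diag_eq_Eth[of _ _ _ _ n] algebra_simps del: gauge.simps)
    qed (simp add: rescale_def slice_X_def matact_EXm X_diag_eq_Eth[of _ _ _ _ n])
  qed (simp add: rescale_def matact_def)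
qed

lemma rescale_slice_Y:
  assumes "odd n" "\<And>r. r < n \<Longrightarrow> dunkl_coeff k1 (n - r) \<noteq> 0"
  shows "rescale n (gauge k1 n) (slice_Y k1 k2 k3 n P)
       = matact n (EYm n (W_a k1 k2 k3 n) (W_b k1 k2 k3 n) (W_c k1 k2 k3 n)) (rescale n (gauge k1 n) P)"
proof
  fix r
  show "rescale n (gauge k1 n) (slice_Y k1 k2 k3 n P) r
      = matact n (EYm n (W_a k1 k2 k3 n) (W_b k1 k2 k3 n) (W_c k1 k2 k3 n)) (rescale n (gauge k1 n) P) r"
  proof (cases "r \<le> n")
    case True
    show ?thesis
    proof (cases "r < n")
      case less: True
      then have "(-1::complex) ^ (n - r - 1) = (-1) ^ r"
        using assms(1) by (cases "even r") auto
      moreover have "gauge k1 n r = gauge k1 n (Suc r) * (\<i> * (-1) ^ r * dunkl_coeff k1 (n - r))"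
        using assms(2) less by (intro gauge_eq_gauge_Suc)
      ultimately show ?thesis
        using less assms(1)
        by (simp add: rescale_def slice_Y_def matact_EYm Y_diag_eq_Eth Eph_W algebra_simps del: gauge.simps)
    next
      case False
      with True show ?thesis
        using Y_diag_eq_Eth[OF assms(1), of n k1 k2 k3] by (simp add: rescale_def slice_Y_def matact_EYm)
    qed
  qed (simp add: rescale_def matact_def)
qed

lemma rescale_slice_Z:
  assumes "odd n" "\<And>r. r < n \<Longrightarrow> dunkl_coeff k1 (n - r) \<noteq> 0"
  shows "rescale n (gauge k1 n) (slice_Z k1 k2 k3 n P)
       = Eact n (W_a k1 k2 k3 n) (W_b k1 k2 k3 n) (W_c k1 k2 k3 n) GZ (rescale n (gauge k1 n) P)"
proof
  fix r
  let ?a = "W_a k1 k2 k3 n" and ?b = "W_b k1 k2 k3 n" and ?c = "W_c k1 k2 k3 n" and ?g = "gauge k1 n"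
  show "rescale n ?g (slice_Z k1 k2 k3 n P) r = Eact n ?a ?b ?c GZ (rescale n ?g P) r"
  proof (cases "r \<le> n")
    case True
    have lower: "(if r = 0 then 0 else (Eth n ?b (r - 1) + Eth n ?b r) * rescale n ?g P (r - 1))
        = - (?g r * (if r = 0 then 0 else \<i> * dunkl_coeff k1 (Suc (n - r)) * P (r - 1)))"
    proof (cases r)
      case (Suc m)
      with True have "?g m = ?g r * (\<i> * (-1) ^ m * dunkl_coeff k1 (n - m))" "Suc (n - r) = n - m"
        using assms(2)[of m] by (auto intro: gauge_eq_gauge_Suc)
      with Suc True show ?thesis
        by (simp add: rescale_def Eth_W_b_Suc_sum algebra_simps del: gauge.simps)
    qed simp
    have upper: "(if r < n then Eph n ?a ?b ?c (Suc r) * (Eth n ?a r + Eth n ?a (Suc r)) * rescale n ?g P (Suc r) else 0)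
        = ?g r * (if r < n then \<i> * dunkl_coeff k2 (Suc r) * P (Suc r) else 0)"
    proof (cases "r < n")
      case True
      then have "?g r = ?g (Suc r) * (\<i> * (-1) ^ r * dunkl_coeff k1 (n - r))"
        using assms(2) by (intro gauge_eq_gauge_Suc)
      with True show ?thesis
        by (simp add: rescale_def Eph_W[OF assms(1)] Eth_W_a_Suc_sum algebra_simps del: gauge.simps)
    qed simp
    have diag: "2 * Eth n ?a r * Eth n ?b r + (if r = 0 then 0 else Eph n ?a ?b ?c r)
        + (if r < n then Eph n ?a ?b ?c (Suc r) else 0) - (?c\<^sup>2 - ?a\<^sup>2 - ?b\<^sup>2 + (of_nat n + 1)\<^sup>2 / 4)
        = Z_diag (kap k1 k2 k3) (n - r) r"
    proof -
      have "(if r = 0 then 0 else Eph n ?a ?b ?c r) = dunkl_coeff k1 (Suc (n - r)) * dunkl_coeff k2 r"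
        using True by (cases r) (simp_all add: Eph_W[OF assms(1)] Suc_diff_Suc)
      moreover have "(if r < n then Eph n ?a ?b ?c (Suc r) else 0) = dunkl_coeff k1 (n - r) * dunkl_coeff k2 (Suc r)"
        using True by (cases "r < n") (simp_all add: Eph_W[OF assms(1)])
      ultimately show ?thesis
        using Z_diag_eq_Eth_Eph[OF assms(1) True] by simp
    qed
    show ?thesis
      unfolding Eact_Z_apply[OF True] lower upper diag using True
      by (simp add: rescale_def slice_Z_def algebra_simps)
  qed (simp add: rescale_def Eact_def matact_def)
qed

definition slice_op :: "real \<Rightarrow> real \<Rightarrow> real \<Rightarrow> nat \<Rightarrow> BIgen \<Rightarrow> (nat \<Rightarrow> complex) \<Rightarrow> nat \<Rightarrow> complex" where
  "slice_op k1 k2 k3 n g = (case g of GX \<Rightarrow> slice_X k1 k2 k3 n | GY \<Rightarrow> slice_Y k1 k2 k3 n | GZ \<Rightarrow> slice_Z k1 k2 k3 n)"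

lemma slice_fst_Mact:
  assumes "odd n" "F \<in> Mspace k1 k2 k3 n" "r \<le> n"
  shows "slice_fst n (Mact k1 k2 k3 g F) r = slice_op k1 k2 k3 n g (slice_fst n F) r"
  using assms by (cases g) (simp_all add: slice_op_def Mspace_def slice_fst_X slice_fst_Y slice_fst_Z)

lemma slice_snd_Mact:
  assumes "odd n" "F \<in> Mspace k1 k2 k3 n" "r \<le> n"
  shows "slice_snd n (Mact k1 k2 k3 g F) r = slice_op k1 k2 k3 n g (slice_snd n F) r"
  using assms by (cases g) (simp_all add: slice_op_def Mspace_def slice_snd_X slice_snd_Y slice_snd_Z)

lemma rescale_slice_op:
  assumes "odd n" "\<And>r. r < n \<Longrightarrow> dunkl_coeff k1 (n - r) \<noteq> 0"
  shows "rescale n (gauge k1 n) (slice_op k1 k2 k3 n g P)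
       = Eact n (W_a k1 k2 k3 n) (W_b k1 k2 k3 n) (W_c k1 k2 k3 n) g (rescale n (gauge k1 n) P)"
  using assms
  by (cases g) (simp_all add: slice_op_def Eact_def rescale_slice_X rescale_slice_Y rescale_slice_Z)

lemma rescale_cong: "(\<And>r. r \<le> n \<Longrightarrow> P r = Q r) \<Longrightarrow> rescale n g P = rescale n g Q"
  by (auto simp: rescale_def)

text \<open>The Dirac equation solved for the coefficients of \<open>x\<^sub>3\<^bsup>c+1\<^esup>\<close> in terms of those of \<open>x\<^sub>3\<^bsup>c\<^esup>\<close>;
  where \<open>[c + 1]\<^sub>k\<^sub>3 = 0\<close> the division by zero makes them \<open>0\<close>.\<close>

definition dirac_lift ::
  "(nat \<Rightarrow> real) \<Rightarrow> nat \<Rightarrow> (bool \<Rightarrow> nat \<Rightarrow> nat \<Rightarrow> complex) \<Rightarrow> bool \<Rightarrow> nat \<Rightarrow> nat \<Rightarrow> complex" where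
  "dirac_lift k c G j a b = (if j
      then (dunkl_coeff (k 1) (Suc a) * G False (Suc a) b + \<i> * dunkl_coeff (k 2) (Suc b) * G False a (Suc b))
           / dunkl_coeff (k 3) (Suc c)
      else - (dunkl_coeff (k 1) (Suc a) * G True (Suc a) b - \<i> * dunkl_coeff (k 2) (Suc b) * G True a (Suc b))
           / dunkl_coeff (k 3) (Suc c))"

primrec extend_coeffs ::
  "(nat \<Rightarrow> real) \<Rightarrow> (bool \<Rightarrow> nat \<Rightarrow> nat \<Rightarrow> complex) \<Rightarrow> nat \<Rightarrow> bool \<Rightarrow> nat \<Rightarrow> nat \<Rightarrow> complex" where
  "extend_coeffs k B 0 = B"
| "extend_coeffs k B (Suc c) = dirac_lift k c (extend_coeffs k B c)"

lemma Dirac_eq_0_lift: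
  assumes "Dirac k F = (\<lambda>_. 0)" "dunkl_coeff (k 3) (Suc c) \<noteq> 0"
  shows "F (j, (a, b, Suc c)) = dirac_lift k c (\<lambda>j a b. F (j, (a, b, c))) j a b"
proof (cases j)
  case True
  have "dunkl_coeff (k 3) (Suc c) * F (True, (a, b, Suc c)) = dunkl_coeff (k 1) (Suc a) * F (False, (Suc a, b, c))
      + \<i> * dunkl_coeff (k 2) (Suc b) * F (False, (a, Suc b, c))"
    using fun_cong[OF assms(1), of "(True, (a, b, c))"] unfolding Dirac_apply_True by simp
  with True assms(2) show ?thesis
    by (simp add: dirac_lift_def nonzero_eq_divide_eq mult.commute)
next
  case False
  have "dunkl_coeff (k 3) (Suc c) * F (False, (a, b, Suc c)) = - (dunkl_coeff (k 1) (Suc a) * F (True, (Suc a, b, c))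
      - \<i> * dunkl_coeff (k 2) (Suc b) * F (True, (a, Suc b, c)))"
    using fun_cong[OF assms(1), of "(False, (a, b, c))"] unfolding Dirac_apply_False by (simp add: algebra_simps)
  with False assms(2) show ?thesis
    by (simp add: dirac_lift_def nonzero_eq_divide_eq mult.commute)
qed

definition dirac_extend :: "(nat \<Rightarrow> real) \<Rightarrow> (bool \<Rightarrow> nat \<Rightarrow> nat \<Rightarrow> complex) \<Rightarrow> spoly" where
  "dirac_extend k B = (\<lambda>(j, a, b, c). extend_coeffs k B c j a b)"

lemma dirac_extend_apply [simp]: "dirac_extend k B (j, (a, b, c)) = extend_coeffs k B c j a b"
  by (simp add: dirac_extend_def)

lemma extend_coeffs_degree:
  assumes "\<And>j a b. a + b \<noteq> n \<Longrightarrow> B j a b = 0"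
  shows "a + b + c \<noteq> n \<Longrightarrow> extend_coeffs k B c j a b = 0"
proof (induction c arbitrary: a b j)
  case (Suc c)
  then have "Suc a + b + c \<noteq> n" "a + Suc b + c \<noteq> n"
    by auto
  with Suc.IH show ?case
    by (simp add: dirac_lift_def)
qed (use assms in simp)

lemma dunkl_coeff_Suc_nonzero_below:
  "Suc c \<le> n \<Longrightarrow> ereal (real n) < tval \<kappa> \<Longrightarrow> dunkl_coeff \<kappa> (Suc c) \<noteq> 0"
  by (rule dunkl_coeff_nonzero) (auto intro: le_less_trans[rotated])

lemma dirac_extend_in_Mspace:
  assumes "\<And>j a b. a + b \<noteq> n \<Longrightarrow> B j a b = 0" "ereal (real n) < tval k3"
  shows "dirac_extend (kap k1 k2 k3) B \<in> Mspace k1 k2 k3 n"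
proof -
  let ?E = "dirac_extend (kap k1 k2 k3) B"
  have "Dirac (kap k1 k2 k3) ?E (j, (a, b, c)) = 0" for j a b c
  proof (cases "dunkl_coeff k3 (Suc c) = 0")
    case True
    then have "n < Suc c"
      using dunkl_coeff_Suc_nonzero_below[OF _ assms(2)] by (meson not_le)
    then have "Suc a + b + c \<noteq> n" "a + Suc b + c \<noteq> n"
      by auto
    with True show ?thesis
      by (cases j) (simp_all add: Dirac_apply_False Dirac_apply_True dirac_lift_def extend_coeffs_degree[OF assms(1)])
  next
    case False
    then show ?thesis
      by (cases j) (simp_all add: Dirac_apply_False Dirac_apply_True dirac_lift_def field_simps)
  qed
  moreover have "?E (j, \<alpha>) = 0" if "mdeg \<alpha> \<noteq> n" for j \<alpha>
    using that extend_coeffs_degree[OF assms(1)] by (cases \<alpha>) auto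
  ultimately show ?thesis
    unfolding Mspace_def by (auto intro!: ext)
qed

lemma Mspace_eq_dirac_extend:
  assumes "F \<in> Mspace k1 k2 k3 n" "ereal (real n) < tval k3"
  shows "F = dirac_extend (kap k1 k2 k3) (\<lambda>j a b. F (j, (a, b, 0)))"
proof -
  have coeffs: "\<forall>j a b. F (j, (a, b, c)) = extend_coeffs (kap k1 k2 k3) (\<lambda>j a b. F (j, (a, b, 0))) c j a b" for c
  proof (induction c)
    case (Suc c)
    show ?case
    proof (intro allI)
      fix j a b
      show "F (j, (a, b, Suc c)) = extend_coeffs (kap k1 k2 k3) (\<lambda>j a b. F (j, (a, b, 0))) (Suc c) j a b"
      proof (cases "dunkl_coeff k3 (Suc c) = 0")
        case True
        then have "a + b + Suc c \<noteq> n"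
          using dunkl_coeff_Suc_nonzero_below[OF _ assms(2)] by auto
        with True assms(1) show ?thesis
          by (simp add: Mspace_def dirac_lift_def)
      next
        case False
        with assms(1) have "F (j, (a, b, Suc c)) = dirac_lift (kap k1 k2 k3) c (\<lambda>j a b. F (j, (a, b, c))) j a b"
          by (intro Dirac_eq_0_lift) (simp_all add: Mspace_def)
        also have "(\<lambda>j a b. F (j, (a, b, c))) = extend_coeffs (kap k1 k2 k3) (\<lambda>j a b. F (j, (a, b, 0))) c"
          using Suc.IH by (simp add: fun_eq_iff)
        finally show ?thesis
          by simp
      qed
    qed
  qed simp
  show ?thesis
  proof
    fix x :: "bool \<times> mono"
    obtain j a b c where x: "x = (j, (a, b, c))"
      by (cases x) auto
    show "F x = dirac_extend (kap k1 k2 k3) (\<lambda>j a b. F (j, (a, b, 0))) x"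
      unfolding x dirac_extend_apply using coeffs by blast
  qed
qed

definition slice_map :: "real \<Rightarrow> nat \<Rightarrow> spoly \<Rightarrow> (nat + nat \<Rightarrow> complex)" where
  "slice_map k1 n F = (\<lambda>x. case x of
      Inl s \<Rightarrow> rescale n (gauge k1 n) (slice_fst n F) s
    | Inr s \<Rightarrow> rescale n (gauge k1 n) (slice_snd n F) s)"

lemma slice_map_Mact:
  assumes "odd n" "\<And>r. r < n \<Longrightarrow> dunkl_coeff k1 (n - r) \<noteq> 0" "F \<in> Mspace k1 k2 k3 n"
  shows "slice_map k1 n (Mact k1 k2 k3 g F)
       = dsum_act (Eact n (W_a k1 k2 k3 n) (W_b k1 k2 k3 n) (W_c k1 k2 k3 n))
                  (Eact n (W_a k1 k2 k3 n) (W_b k1 k2 k3 n) (W_c k1 k2 k3 n)) g (slice_map k1 n F)"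
proof -
  have "rescale n (gauge k1 n) (slice_fst n (Mact k1 k2 k3 g F))
      = rescale n (gauge k1 n) (slice_op k1 k2 k3 n g (slice_fst n F))"
    "rescale n (gauge k1 n) (slice_snd n (Mact k1 k2 k3 g F))
      = rescale n (gauge k1 n) (slice_op k1 k2 k3 n g (slice_snd n F))"
    using assms(1,3) by (auto intro!: rescale_cong slice_fst_Mact slice_snd_Mact)
  then show ?thesis
    by (simp add: slice_map_def dsum_act_def rescale_slice_op[OF assms(1,2)] fun_eq_iff split: sum.split)
qed

lemma slice_map_inj:
  assumes "\<And>r. r < n \<Longrightarrow> dunkl_coeff k1 (n - r) \<noteq> 0" "ereal (real n) < tval k3"
  shows "inj_on (slice_map k1 n) (Mspace k1 k2 k3 n)"
proof (rule inj_onI)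
  fix F G
  assume F: "F \<in> Mspace k1 k2 k3 n" and G: "G \<in> Mspace k1 k2 k3 n" and eq: "slice_map k1 n F = slice_map k1 n G"
  have agree: "F (j, (a, b, 0)) = G (j, (a, b, 0))" for j a b
  proof (cases "a + b = n")
    case True
    have "gauge k1 n b \<noteq> 0"
      using assms(1) True by (intro gauge_nonzero) auto
    with True fun_cong[OF eq, of "Inl b"] fun_cong[OF eq, of "Inr b"] show ?thesis
      by (cases j) (auto simp: slice_map_def rescale_def slice_fst_def slice_snd_def)
  next
    case False
    with F G show ?thesis
      by (simp add: Mspace_def)
  qed
  have "F = dirac_extend (kap k1 k2 k3) (\<lambda>j a b. F (j, (a, b, 0)))"
    by (rule Mspace_eq_dirac_extend[OF F assms(2)])
  also have "\<dots> = dirac_extend (kap k1 k2 k3) (\<lambda>j a b. G (j, (a, b, 0)))"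
    by (simp only: agree)
  also have "\<dots> = G"
    by (rule Mspace_eq_dirac_extend[OF G assms(2), symmetric])
  finally show "F = G" .
qed

lemma slice_map_surj:
  assumes "\<And>r. r < n \<Longrightarrow> dunkl_coeff k1 (n - r) \<noteq> 0" "ereal (real n) < tval k3"
    and w: "w \<in> dsum_car (Ecar n) (Ecar n)"
  shows "w \<in> slice_map k1 n ` Mspace k1 k2 k3 n"
proof -
  define B where "B = (\<lambda>j a b. if a + b = n
      then (if j then (-1) ^ b * w (Inr b) else w (Inl b)) / gauge k1 n b else (0::complex))"
  have "dirac_extend (kap k1 k2 k3) B \<in> Mspace k1 k2 k3 n"
    by (rule dirac_extend_in_Mspace[OF _ assms(2)]) (simp add: B_def)
  moreover have "slice_map k1 n (dirac_extend (kap k1 k2 k3) B) = w"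
  proof
    fix x
    have "gauge k1 n s \<noteq> 0" if "s \<le> n" for s
      using assms(1) that by (intro gauge_nonzero) auto
    moreover have "w (Inl s) = 0" "w (Inr s) = 0" if "n < s" for s
      using w that by (auto simp: dsum_car_def Ecar_def)
    ultimately show "slice_map k1 n (dirac_extend (kap k1 k2 k3) B) x = w x"
      by (cases x) (auto simp: slice_map_def rescale_def slice_fst_def slice_snd_def B_def)
  qed
  ultimately show ?thesis
    by (metis image_eqI)
qed

lemma Mspace_iso_dsum_E:
  assumes "odd n" "ereal (real n) < tval k1" "ereal (real n) < tval k3"
  shows "bi_iso (Mspace k1 k2 k3 n) (Mact k1 k2 k3) (dsum_car (Ecar n) (Ecar n))
    (dsum_act (Eact n (W_a k1 k2 k3 n) (W_b k1 k2 k3 n) (W_c k1 k2 k3 n))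
              (Eact n (W_a k1 k2 k3 n) (W_b k1 k2 k3 n) (W_c k1 k2 k3 n)))"
  unfolding bi_iso_def
proof (intro exI[of _ "slice_map k1 n"] conjI ballI allI)
  have nonzero: "dunkl_coeff k1 (n - r) \<noteq> 0" if "r < n" for r
    using that by (intro dunkl_coeff_nonzero) (auto intro: le_less_trans[OF _ assms(2)])
  have "slice_map k1 n ` Mspace k1 k2 k3 n \<subseteq> dsum_car (Ecar n) (Ecar n)"
    by (auto simp: dsum_car_def Ecar_def slice_map_def rescale_def)
  with slice_map_inj[OF nonzero assms(3)] slice_map_surj[OF nonzero assms(3)]
  show "bij_betw (slice_map k1 n) (Mspace k1 k2 k3 n) (dsum_car (Ecar n) (Ecar n))"
    unfolding bij_betw_def by blast
  show "slice_map k1 n (Mact k1 k2 k3 g u)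
      = dsum_act (Eact n (W_a k1 k2 k3 n) (W_b k1 k2 k3 n) (W_c k1 k2 k3 n))
                 (Eact n (W_a k1 k2 k3 n) (W_b k1 k2 k3 n) (W_c k1 k2 k3 n)) g (slice_map k1 n u)"
    if "u \<in> Mspace k1 k2 k3 n" for g u
    by (rule slice_map_Mact[OF assms(1) nonzero that])
qed (auto simp: slice_map_def rescale_def slice_fst_def slice_snd_def algebra_simps split: sum.split)

section \<open>An isomorphism \<open>E\<^sub>d(a, -\<beta>, c) \<cong> E\<^sub>d(a, \<beta>, c)\<close>\<close>

definition psi_core :: "complex \<Rightarrow> nat \<Rightarrow> nat \<Rightarrow> complex" where
  "psi_core \<beta> r j = (if even r \<and> odd j then 0
      else of_nat ((r div 2) choose (j div 2)) * pochhammer \<beta> ((r + 1) div 2 - (j + 1) div 2))"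

lemma psi_core_diag: "psi_core \<beta> j j = 1"
  by (simp add: psi_core_def)

lemma psi_core_above_diag: "r < j \<Longrightarrow> psi_core \<beta> r j = 0"
  by (auto simp: psi_core_def binomial_eq_0_iff elim!: evenE oddE)

lemma pochhammer_Suc_diff:
  "J \<le> R \<Longrightarrow> pochhammer (\<beta>::complex) (Suc R - J) = pochhammer \<beta> (R - J) * (\<beta> + of_nat R - of_nat J)"
  by (simp add: Suc_diff_le pochhammer_Suc of_nat_diff)

lemma binomial_Suc_absorb:
  "of_nat (Suc J) * (of_nat (R choose Suc J) :: complex) = (of_nat R - of_nat J) * of_nat (R choose J)"
proof (cases "J \<le> R")
  case True
  have "Suc J * (R choose Suc J) = (R - J) * (R choose J)"
    using binomial_absorption[of J R] binomial_absorb_comp[of R J] by simp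
  with True show ?thesis
    by (metis of_nat_diff of_nat_mult)
qed (simp add: binomial_eq_0)

lemma binomial_pred_absorb:
  "(of_nat (Suc R) - of_nat J) * (of_nat (Suc R choose J) :: complex) = of_nat (Suc R) * of_nat (R choose J)"
proof (cases "J \<le> Suc R")
  case True
  then show ?thesis
    using binomial_absorb_comp[of "Suc R" J] by (metis diff_Suc_1 of_nat_diff of_nat_mult)
qed (simp add: binomial_eq_0)

lemma parity_cases:
  obtains R where "r = 2 * R" | R where "r = Suc (2 * R)"
  by (cases "even r") (auto elim: evenE oddE)

text \<open>\<open>Eph\<close> factors as \<open>-\<rho>\<cdot>\<kappa>\<close> along the superdiagonal of \<open>Y\<close> and, for \<open>-\<beta>\<close>, as \<open>-\<rho>\<cdot>\<lambda>\<close>. The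
  intertwiner \<open>psi\<close> is \<open>psi_core\<close> scaled on both sides by products of \<open>\<rho>\<close>'s, which reduces its
  intertwining relations to the vanishing of the residuals of \<open>psi_core\<close> below.\<close>

definition rho :: "nat \<Rightarrow> complex \<Rightarrow> complex \<Rightarrow> complex \<Rightarrow> nat \<Rightarrow> complex" where
  "rho d a \<beta> c t = (if odd t then - (of_nat t + 1) else ((a + \<beta> - (of_nat d - 1) / 2 + of_nat t)\<^sup>2 - c\<^sup>2) / 2)"

definition kappa :: "nat \<Rightarrow> nat \<Rightarrow> complex" where
  "kappa d r = (if even r then 2 else of_nat d - of_nat r)"

definition lambda :: "nat \<Rightarrow> nat \<Rightarrow> complex" where
  "lambda d j = (if odd j then 2 else of_nat d - of_nat j + 1)"

definition psi_core_X_residual :: "nat \<Rightarrow> complex \<Rightarrow> complex \<Rightarrow> complex \<Rightarrow> nat \<Rightarrow> nat \<Rightarrow> complex" where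
  "psi_core_X_residual d a \<beta> c r j = (Eth d a r - Eth d a j) * psi_core \<beta> r j
     + (if r = 0 then 0 else rho d a \<beta> c (r - 1) * psi_core \<beta> (r - 1) j)
     - rho d a (- \<beta>) c j * psi_core \<beta> r (Suc j)"

definition psi_core_Y_residual :: "nat \<Rightarrow> complex \<Rightarrow> nat \<Rightarrow> nat \<Rightarrow> complex" where
  "psi_core_Y_residual d \<beta> r j = (Eth d \<beta> r - Eth d (- \<beta>) j) * psi_core \<beta> r j
     - kappa d r * psi_core \<beta> (Suc r) j
     + (if j = 0 then 0 else lambda d j * psi_core \<beta> r (j - 1))"

lemma psi_core_X_residual_even_even: "psi_core_X_residual d a \<beta> c (2 * R) (2 * J) = 0"
proof (cases R)
  case (Suc R')
  have entries: "psi_core \<beta> (2 * R) (2 * J) = of_nat (R choose J) * pochhammer \<beta> (R - J)"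
    "psi_core \<beta> (2 * R - 1) (2 * J) = of_nat (R' choose J) * pochhammer \<beta> (R - J)"
    "psi_core \<beta> (2 * R) (Suc (2 * J)) = 0"
    "rho d a \<beta> c (2 * R - 1) = - (2 * of_nat R)"
    "Eth d a (2 * R) - Eth d a (2 * J) = 2 * (of_nat R - of_nat J)"
    using Suc by (simp_all add: psi_core_def rho_def Eth_def field_simps)
  have "psi_core_X_residual d a \<beta> c (2 * R) (2 * J)
      = 2 * pochhammer \<beta> (R - J) * ((of_nat R - of_nat J) * of_nat (R choose J) - of_nat R * of_nat (R' choose J))"
    unfolding psi_core_X_residual_def entries using Suc by (simp add: algebra_simps)
  also have "\<dots> = 0"
    using binomial_pred_absorb[of R' J] Suc by simp
  finally show ?thesis .
qed (cases J; simp add: psi_core_X_residual_def psi_core_def)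

lemma psi_core_X_residual_even_odd: "psi_core_X_residual d a \<beta> c (2 * R) (Suc (2 * J)) = 0"
proof (cases R)
  case (Suc R')
  have entries: "psi_core \<beta> (2 * R) (Suc (2 * J)) = 0"
    "psi_core \<beta> (2 * R - 1) (Suc (2 * J)) = of_nat (R' choose J) * pochhammer \<beta> (R' - J)"
    "psi_core \<beta> (2 * R) (Suc (Suc (2 * J))) = of_nat (Suc R' choose Suc J) * pochhammer \<beta> (R' - J)"
    "rho d a \<beta> c (2 * R - 1) = - (2 * of_nat (Suc R'))"
    "rho d a (- \<beta>) c (Suc (2 * J)) = - (2 * of_nat (Suc J))"
    using Suc by (simp_all add: psi_core_def rho_def)
  have "psi_core_X_residual d a \<beta> c (2 * R) (Suc (2 * J))
      = 2 * pochhammer \<beta> (R' - J) * (of_nat (Suc R' choose Suc J) * of_nat (Suc J) - of_nat (Suc R') * of_nat (R' choose J))"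
    unfolding psi_core_X_residual_def entries using Suc by (simp add: algebra_simps)
  also have "\<dots> = 0"
    by (metis Suc_times_binomial_eq diff_self of_nat_mult mult_zero_right)
  finally show ?thesis .
qed (simp add: psi_core_X_residual_def psi_core_def psi_core_above_diag)

lemma psi_core_X_residual_odd_even: "psi_core_X_residual d a \<beta> c (Suc (2 * R)) (2 * J) = 0"
proof (cases "J \<le> R")
  case True
  have entries: "psi_core \<beta> (Suc (2 * R)) (2 * J) = of_nat (R choose J) * pochhammer \<beta> (R - J) * (\<beta> + of_nat R - of_nat J)"
    "psi_core \<beta> (Suc (2 * R) - 1) (2 * J) = of_nat (R choose J) * pochhammer \<beta> (R - J)"
    "psi_core \<beta> (Suc (2 * R)) (Suc (2 * J)) = of_nat (R choose J) * pochhammer \<beta> (R - J)"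
    by (simp_all add: psi_core_def pochhammer_Suc_diff[OF True])
  have "psi_core_X_residual d a \<beta> c (Suc (2 * R)) (2 * J) = of_nat (R choose J) * pochhammer \<beta> (R - J)
      * ((Eth d a (Suc (2 * R)) - Eth d a (2 * J)) * (\<beta> + of_nat R - of_nat J) + rho d a \<beta> c (2 * R) - rho d a (- \<beta>) c (2 * J))"
    unfolding psi_core_X_residual_def entries by (simp add: algebra_simps)
  also have "\<dots> = 0"
    by (simp add: Eth_def rho_def field_simps power2_eq_square)
  finally show ?thesis .
qed (simp add: psi_core_X_residual_def psi_core_def binomial_eq_0)

lemma psi_core_X_residual_odd_odd: "psi_core_X_residual d a \<beta> c (Suc (2 * R)) (Suc (2 * J)) = 0"
proof -
  have entries: "psi_core \<beta> (Suc (2 * R)) (Suc (2 * J)) = of_nat (R choose J) * pochhammer \<beta> (R - J)"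
    "psi_core \<beta> (Suc (2 * R) - 1) (Suc (2 * J)) = 0"
    "psi_core \<beta> (Suc (2 * R)) (Suc (Suc (2 * J))) = of_nat (R choose Suc J) * pochhammer \<beta> (R - J)"
    "Eth d a (Suc (2 * R)) - Eth d a (Suc (2 * J)) = 2 * (of_nat J - of_nat R)"
    "rho d a (- \<beta>) c (Suc (2 * J)) = - (2 * of_nat (Suc J))"
    by (simp_all add: psi_core_def Eth_def rho_def field_simps)
  have "psi_core_X_residual d a \<beta> c (Suc (2 * R)) (Suc (2 * J))
      = 2 * pochhammer \<beta> (R - J) * (of_nat (Suc J) * of_nat (R choose Suc J) - (of_nat R - of_nat J) * of_nat (R choose J))"
    unfolding psi_core_X_residual_def entries by (simp add: algebra_simps)
  also have "\<dots> = 0"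
    using binomial_Suc_absorb[of J R] by simp
  finally show ?thesis .
qed

lemma psi_core_X_residual_eq_0: "psi_core_X_residual d a \<beta> c r j = 0"
  by (cases r rule: parity_cases; cases j rule: parity_cases)
    (simp_all add: psi_core_X_residual_even_even psi_core_X_residual_even_odd
      psi_core_X_residual_odd_even psi_core_X_residual_odd_odd)

lemma psi_core_Y_residual_even_even: "psi_core_Y_residual d \<beta> (2 * R) (2 * J) = 0"
proof (cases "J \<le> R")
  case True
  have entries: "psi_core \<beta> (2 * R) (2 * J) = of_nat (R choose J) * pochhammer \<beta> (R - J)"
    "psi_core \<beta> (Suc (2 * R)) (2 * J) = of_nat (R choose J) * pochhammer \<beta> (R - J) * (\<beta> + of_nat R - of_nat J)"
    "(if 2 * J = 0 then 0 else lambda d (2 * J) * psi_core \<beta> (2 * R) (2 * J - 1)) = 0"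
    "Eth d \<beta> (2 * R) - Eth d (- \<beta>) (2 * J) = 2 * (\<beta> + of_nat R - of_nat J)"
    "kappa d (2 * R) = 2"
    by (auto simp: psi_core_def pochhammer_Suc_diff[OF True] Eth_def kappa_def field_simps elim: oddE)
  show ?thesis
    unfolding psi_core_Y_residual_def entries by simp
qed (simp add: psi_core_Y_residual_def psi_core_def binomial_eq_0)

lemma psi_core_Y_residual_even_odd: "psi_core_Y_residual d \<beta> (2 * R) (Suc (2 * J)) = 0"
  by (simp add: psi_core_Y_residual_def psi_core_def kappa_def lambda_def)

lemma psi_core_Y_residual_odd_even: "psi_core_Y_residual d \<beta> (Suc (2 * R)) (2 * J) = 0"
proof -
  have common: "psi_core \<beta> (Suc (2 * R)) (2 * J) = of_nat (R choose J) * pochhammer \<beta> (Suc R - J)"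
    "psi_core \<beta> (Suc (Suc (2 * R))) (2 * J) = of_nat (Suc R choose J) * pochhammer \<beta> (Suc R - J)"
    "Eth d \<beta> (Suc (2 * R)) - Eth d (- \<beta>) (2 * J) = of_nat d - 2 * of_nat R - 1 - 2 * of_nat J"
    "kappa d (Suc (2 * R)) = of_nat d - 2 * of_nat R - 1"
    by (simp_all add: psi_core_def Eth_def kappa_def field_simps)
  show ?thesis
  proof (cases J)
    case (Suc J')
    have entries: "psi_core \<beta> (Suc (2 * R)) (2 * J - 1) = of_nat (R choose J') * pochhammer \<beta> (Suc R - J)"
      "lambda d (2 * J) = of_nat d - 2 * of_nat J + 1"
      using Suc by (simp_all add: psi_core_def lambda_def)
    have "psi_core_Y_residual d \<beta> (Suc (2 * R)) (2 * J) = - 2 * pochhammer \<beta> (Suc R - J)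
        * (of_nat (Suc J') * of_nat (R choose Suc J') - (of_nat R - of_nat J') * of_nat (R choose J'))"
      unfolding psi_core_Y_residual_def common entries using Suc by (simp add: algebra_simps)
    also have "\<dots> = 0"
      using binomial_Suc_absorb[of J' R] by simp
    finally show ?thesis .
  qed (simp add: psi_core_Y_residual_def psi_core_def Eth_def kappa_def field_simps)
qed

lemma psi_core_Y_residual_odd_odd: "psi_core_Y_residual d \<beta> (Suc (2 * R)) (Suc (2 * J)) = 0"
proof (cases "J \<le> R")
  case True
  have entries: "psi_core \<beta> (Suc (2 * R)) (Suc (2 * J)) = of_nat (R choose J) * pochhammer \<beta> (R - J)"
    "psi_core \<beta> (Suc (Suc (2 * R))) (Suc (2 * J)) = 0"
    "psi_core \<beta> (Suc (2 * R)) (Suc (2 * J) - 1) = of_nat (R choose J) * pochhammer \<beta> (R - J) * (\<beta> + of_nat R - of_nat J)"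
    "Eth d \<beta> (Suc (2 * R)) - Eth d (- \<beta>) (Suc (2 * J)) = - 2 * (\<beta> + of_nat R - of_nat J)"
    "lambda d (Suc (2 * J)) = 2"
    by (simp_all add: psi_core_def pochhammer_Suc_diff[OF True] Eth_def lambda_def field_simps)
  show ?thesis
    unfolding psi_core_Y_residual_def entries by (simp add: algebra_simps)
qed (simp add: psi_core_Y_residual_def psi_core_def binomial_eq_0)

lemma psi_core_Y_residual_eq_0: "psi_core_Y_residual d \<beta> r j = 0"
  by (cases r rule: parity_cases; cases j rule: parity_cases)
    (simp_all add: psi_core_Y_residual_even_even psi_core_Y_residual_even_odd
      psi_core_Y_residual_odd_even psi_core_Y_residual_odd_odd)

definition psi_row_scale :: "nat \<Rightarrow> complex \<Rightarrow> complex \<Rightarrow> complex \<Rightarrow> nat \<Rightarrow> complex" where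
  "psi_row_scale d a \<beta> c r = (\<Prod>t\<in>{r..<d}. rho d a \<beta> c t)"

definition psi_col_scale :: "nat \<Rightarrow> complex \<Rightarrow> complex \<Rightarrow> complex \<Rightarrow> nat \<Rightarrow> complex" where
  "psi_col_scale d a \<beta> c j = (\<Prod>t<j. rho d a (- \<beta>) c t)"

definition psi :: "nat \<Rightarrow> complex \<Rightarrow> complex \<Rightarrow> complex \<Rightarrow> nat \<Rightarrow> nat \<Rightarrow> complex" where
  "psi d a \<beta> c r j = psi_row_scale d a \<beta> c r * psi_col_scale d a \<beta> c j * psi_core \<beta> r j"

lemma psi_row_scale_Suc:
  "r < d \<Longrightarrow> psi_row_scale d a \<beta> c r = rho d a \<beta> c r * psi_row_scale d a \<beta> c (Suc r)"
  unfolding psi_row_scale_def by (simp add: prod.atLeast_Suc_lessThan)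

lemma psi_col_scale_Suc: "psi_col_scale d a \<beta> c (Suc j) = psi_col_scale d a \<beta> c j * rho d a (- \<beta>) c j"
  unfolding psi_col_scale_def by simp

lemma psi_above_diag: "r < j \<Longrightarrow> psi d a \<beta> c r j = 0"
  by (simp add: psi_def psi_core_above_diag)

lemma Eph_even:
  assumes "even i" "i \<le> d"
  shows "Eph d a b c i = of_nat i * (of_nat d - of_nat i + 1)"
proof -
  have "Eph d a b c i = of_nat i * of_nat (d - i + 1)"
    using assms(1) unfolding Eph_def by (simp only: if_True of_nat_mult)
  with assms(2) show ?thesis
    by (simp add: of_nat_diff)
qed

lemma Eph_odd: "odd i \<Longrightarrow> Eph d a b c i = c\<^sup>2 - (2 * a + 2 * b - of_nat d + 2 * of_nat i - 1)\<^sup>2 / 4"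
  unfolding Eph_def by simp

lemma Eph_eq_rho_kappa: "r < d \<Longrightarrow> Eph d a \<beta> c (Suc r) = - rho d a \<beta> c r * kappa d r"
  by (cases "even r") (simp_all add: Eph_odd Eph_even Suc_leI rho_def kappa_def of_nat_diff field_simps power2_eq_square)

lemma Eph_eq_rho_lambda: "0 < t \<Longrightarrow> t \<le> d \<Longrightarrow> Eph d a (- \<beta>) c t = - rho d a (- \<beta>) c (t - 1) * lambda d t"
  by (cases "even t") (simp_all add: Eph_odd Eph_even rho_def lambda_def of_nat_diff field_simps power2_eq_square)

lemma psi_X_entry:
  assumes "r \<le> d"
  shows "Eth d a r * psi d a \<beta> c r t + (if r = 0 then 0 else psi d a \<beta> c (r - 1) t)
       = psi d a \<beta> c r t * Eth d a t + psi d a \<beta> c r (Suc t)"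
proof -
  have lower: "(if r = 0 then 0 else psi d a \<beta> c (r - 1) t)
      = psi_row_scale d a \<beta> c r * psi_col_scale d a \<beta> c t * (if r = 0 then 0 else rho d a \<beta> c (r - 1) * psi_core \<beta> (r - 1) t)"
    using assms psi_row_scale_Suc[of "r - 1" d a \<beta> c] by (cases r) (simp_all add: psi_def)
  have upper: "psi d a \<beta> c r (Suc t)
      = psi_row_scale d a \<beta> c r * psi_col_scale d a \<beta> c t * (rho d a (- \<beta>) c t * psi_core \<beta> r (Suc t))"
    by (simp add: psi_def psi_col_scale_Suc)
  have "Eth d a r * psi d a \<beta> c r t + (if r = 0 then 0 else psi d a \<beta> c (r - 1) t)
      - (psi d a \<beta> c r t * Eth d a t + psi d a \<beta> c r (Suc t))
      = psi_row_scale d a \<beta> c r * psi_col_scale d a \<beta> c t * psi_core_X_residual d a \<beta> c r t"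
    unfolding lower upper by (simp add: psi_def psi_core_X_residual_def algebra_simps)
  then show ?thesis
    by (simp add: psi_core_X_residual_eq_0)
qed

lemma psi_Y_entry:
  assumes "odd d" "r \<le> d" "t \<le> d"
  shows "Eth d \<beta> r * psi d a \<beta> c r t + (if r < d then Eph d a \<beta> c (Suc r) * psi d a \<beta> c (Suc r) t else 0)
       = psi d a \<beta> c r t * Eth d (- \<beta>) t + (if t = 0 then 0 else psi d a \<beta> c r (t - 1) * Eph d a (- \<beta>) c t)"
proof -
  have lower: "(if r < d then Eph d a \<beta> c (Suc r) * psi d a \<beta> c (Suc r) t else 0)
      = psi_row_scale d a \<beta> c r * psi_col_scale d a \<beta> c t * (- kappa d r * psi_core \<beta> (Suc r) t)"
  proof (cases "r < d")
    case False
    with assms have "kappa d r = 0"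
      by (simp add: kappa_def)
    with False show ?thesis
      by simp
  qed (simp add: psi_row_scale_Suc Eph_eq_rho_kappa psi_def algebra_simps)
  have upper: "(if t = 0 then 0 else psi d a \<beta> c r (t - 1) * Eph d a (- \<beta>) c t)
      = psi_row_scale d a \<beta> c r * psi_col_scale d a \<beta> c t * (- (if t = 0 then 0 else lambda d t * psi_core \<beta> r (t - 1)))"
    using assms(3) psi_col_scale_Suc[of d a \<beta> c "t - 1"] Eph_eq_rho_lambda[of t d a \<beta> c]
    by (cases t) (simp_all add: psi_def algebra_simps)
  have "Eth d \<beta> r * psi d a \<beta> c r t + (if r < d then Eph d a \<beta> c (Suc r) * psi d a \<beta> c (Suc r) t else 0)
      - (psi d a \<beta> c r t * Eth d (- \<beta>) t + (if t = 0 then 0 else psi d a \<beta> c r (t - 1) * Eph d a (- \<beta>) c t))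
      = psi_row_scale d a \<beta> c r * psi_col_scale d a \<beta> c t * psi_core_Y_residual d \<beta> r t"
    unfolding lower upper by (simp add: psi_def psi_core_Y_residual_def algebra_simps)
  then show ?thesis
    by (simp add: psi_core_Y_residual_eq_0)
qed

lemma matact_matact: "matact d M (matact d N v) = matact d (\<lambda>r j. \<Sum>s\<le>d. M r s * N s j) v"
proof
  fix r
  have "(\<Sum>s\<le>d. M r s * (\<Sum>j\<le>d. N s j * v j)) = (\<Sum>s\<le>d. \<Sum>j\<le>d. M r s * N s j * v j)"
    by (simp add: sum_distrib_left mult.assoc)
  also have "\<dots> = (\<Sum>j\<le>d. (\<Sum>s\<le>d. M r s * N s j) * v j)"
    by (subst sum.swap) (simp add: sum_distrib_right)
  moreover have "(\<Sum>s\<le>d. M r s * matact d N v s) = (\<Sum>s\<le>d. M r s * (\<Sum>j\<le>d. N s j * v j))"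
    by (rule sum.cong) (auto simp: matact_def)
  ultimately show "matact d M (matact d N v) r = matact d (\<lambda>r j. \<Sum>s\<le>d. M r s * N s j) v r"
    by (simp add: matact_def)
qed

lemma matact_cong: "(\<And>r j. r \<le> d \<Longrightarrow> j \<le> d \<Longrightarrow> M r j = M' r j) \<Longrightarrow> matact d M v = matact d M' v"
  unfolding matact_def by (intro ext) (auto intro!: sum.cong)

lemma matact_add: "matact d M (\<lambda>x. u x + v x) = (\<lambda>y. matact d M u y + matact d M v y)"
  unfolding matact_def by (intro ext) (simp add: sum.distrib algebra_simps)

lemma matact_scale: "matact d M (\<lambda>x. k * u x) = (\<lambda>y. k * matact d M u y)"
  unfolding matact_def by (intro ext) (simp add: sum_distrib_left algebra_simps)

lemma matact_diff: "matact d M (\<lambda>x. u x - v x) = (\<lambda>y. matact d M u y - matact d M v y)"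
  unfolding matact_def by (intro ext) (simp add: sum_subtractf algebra_simps)

lemma matact_beyond: "\<not> r \<le> d \<Longrightarrow> matact d M v r = 0"
  by (simp add: matact_def)

lemma matact_in_Ecar: "matact d M u \<in> Ecar d"
  by (simp add: matact_def Ecar_def)

lemma sum_EXm_right:
  assumes "t \<le> d"
  shows "(\<Sum>s\<le>d. M r s * EXm d a s t) = M r t * Eth d a t + (if t < d then M r (Suc t) else 0)"
proof -
  have "(\<Sum>s\<le>d. M r s * EXm d a s t) = (\<Sum>s\<le>d. (if s = t then M r s * Eth d a t else 0) + (if s = Suc t then M r s else 0))"
    by (rule sum.cong) (auto simp: EXm_def)
  with assms show ?thesis
    by (simp add: sum.distrib)
qed

lemma sum_EYm_right:
  assumes "t \<le> d"
  shows "(\<Sum>s\<le>d. M r s * EYm d a b c s t) = M r t * Eth d b t + (if t = 0 then 0 else M r (t - 1) * Eph d a b c t)"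
proof -
  have "(\<Sum>s\<le>d. M r s * EYm d a b c s t)
      = (\<Sum>s\<le>d. (if s = t then M r s * Eth d b t else 0) + (if s = t - 1 \<and> t \<noteq> 0 then M r s * Eph d a b c t else 0))"
    by (rule sum.cong) (auto simp: EYm_def)
  with assms show ?thesis
    by (auto simp: sum.distrib)
qed

lemma psi_commutes_X: "matact d (psi d a \<beta> c) (matact d (EXm d a) v) = matact d (EXm d a) (matact d (psi d a \<beta> c) v)"
  unfolding matact_matact
proof (rule matact_cong)
  fix r j
  assume "r \<le> d" "j \<le> d"
  moreover have "psi d a \<beta> c r (Suc j) = 0" if "\<not> j < d"
    using that \<open>r \<le> d\<close> by (intro psi_above_diag) simp
  ultimately show "(\<Sum>s\<le>d. psi d a \<beta> c r s * EXm d a s j) = (\<Sum>s\<le>d. EXm d a r s * psi d a \<beta> c s j)"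
    using matact_EXm[of r d a "\<lambda>s. psi d a \<beta> c s j"]
    by (simp add: sum_EXm_right matact_def psi_X_entry)
qed

lemma psi_commutes_Y:
  assumes "odd d"
  shows "matact d (psi d a \<beta> c) (matact d (EYm d a (- \<beta>) c) v) = matact d (EYm d a \<beta> c) (matact d (psi d a \<beta> c) v)"
  unfolding matact_matact
proof (rule matact_cong)
  fix r j
  assume "r \<le> d" "j \<le> d"
  then show "(\<Sum>s\<le>d. psi d a \<beta> c r s * EYm d a (- \<beta>) c s j) = (\<Sum>s\<le>d. EYm d a \<beta> c r s * psi d a \<beta> c s j)"
    using matact_EYm[of r d a \<beta> c "\<lambda>s. psi d a \<beta> c s j"] psi_Y_entry[OF assms, where a = a and \<beta> = \<beta> and c = c]
    by (simp add: sum_EYm_right matact_def)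
qed

lemma psi_commutes_Z:
  assumes "odd d"
  shows "matact d (psi d a \<beta> c) (Eact d a (- \<beta>) c GZ v) = Eact d a \<beta> c GZ (matact d (psi d a \<beta> c) v)"
  unfolding Eact_def BIgen.case matact_diff matact_add matact_scale
  by (simp add: psi_commutes_X psi_commutes_Y[OF assms])

lemma lower_triangular_matact_inj:
  assumes diag: "\<And>r. r \<le> d \<Longrightarrow> M r r \<noteq> 0" and upper: "\<And>r j. r < j \<Longrightarrow> M r j = 0"
  shows "inj_on (matact d M) (Ecar d)"
proof (rule inj_onI)
  fix u w
  assume u: "u \<in> Ecar d" and w: "w \<in> Ecar d" and eq: "matact d M u = matact d M w"
  have "u s = w s" if "s < r" for r s
    using that
  proof (induction r arbitrary: s)
    case (Suc r)
    have "u r = w r"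
    proof (cases "r \<le> d")
      case True
      have "M r s * (u s - w s) = (if s = r then M r r * (u r - w r) else 0)" for s
        using Suc.IH[of s] upper[of r s] by (cases s r rule: linorder_cases) auto
      then have "(\<Sum>s\<le>d. M r s * (u s - w s)) = (\<Sum>s\<le>d. if s = r then M r r * (u r - w r) else 0)"
        by simp
      moreover have "(\<Sum>s\<le>d. M r s * (u s - w s)) = 0"
        using fun_cong[OF eq, of r] True by (simp add: matact_def algebra_simps sum_subtractf)
      ultimately show ?thesis
        using diag[OF True] True by simp
    qed (use u w in \<open>simp add: Ecar_def\<close>)
    with Suc show ?case
      using less_Suc_eq by auto
  qed simp
  then show "u = w"
    by blast
qed

lemma matact_fun_upd:
  assumes "m \<le> d" "r \<le> d"
  shows "matact d M (u(m := x)) r = matact d M u r + M r m * (x - u m)"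
proof -
  have "(\<Sum>s\<le>d. M r s * (u(m := x)) s) = (\<Sum>s\<le>d. M r s * u s + (if s = m then M r m * (x - u m) else 0))"
    by (rule sum.cong) (auto simp: algebra_simps)
  with assms show ?thesis
    by (simp add: matact_def sum.distrib)
qed

lemma lower_triangular_matact_surj:
  assumes diag: "\<And>r. r \<le> d \<Longrightarrow> M r r \<noteq> 0" and upper: "\<And>r j. r < j \<Longrightarrow> M r j = 0"
    and w: "w \<in> Ecar d"
  shows "w \<in> matact d M ` Ecar d"
proof -
  have "\<exists>u\<in>Ecar d. \<forall>r<m. matact d M u r = w r" if "m \<le> Suc d" for m
    using that
  proof (induction m)
    case (Suc m)
    then obtain u where u: "u \<in> Ecar d" and agree: "\<forall>r<m. matact d M u r = w r"
      by auto
    have m: "m \<le> d"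
      using Suc.prems by simp
    define u' where "u' = u(m := u m + (w m - matact d M u m) / M m m)"
    have "u' \<in> Ecar d"
      using u m by (simp add: Ecar_def u'_def)
    moreover have "matact d M u' r = w r" if "r < Suc m" for r
      using that m agree diag[OF m] upper[of r m]
      by (cases "r = m") (simp_all add: u'_def matact_fun_upd)
    ultimately show ?case
      by blast
  qed (auto simp: Ecar_def)
  then obtain u where u: "u \<in> Ecar d" and agree: "\<forall>r<Suc d. matact d M u r = w r"
    by blast
  have "matact d M u = w"
  proof
    fix r
    show "matact d M u r = w r"
      using agree w by (cases "r \<le> d") (auto simp: matact_def Ecar_def)
  qed
  with u show ?thesis
    by blast
qed

lemma lower_triangular_matact_bij:
  assumes "\<And>r. r \<le> d \<Longrightarrow> M r r \<noteq> 0" "\<And>r j. r < j \<Longrightarrow> M r j = 0"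
  shows "bij_betw (matact d M) (Ecar d) (Ecar d)"
proof -
  have "inj_on (matact d M) (Ecar d)"
    using assms by (rule lower_triangular_matact_inj)
  moreover have "Ecar d \<subseteq> matact d M ` Ecar d"
    using assms by (auto intro: lower_triangular_matact_surj)
  ultimately show ?thesis
    unfolding bij_betw_def using matact_in_Ecar by blast
qed

lemma psi_matact_bij:
  assumes "\<And>t. t < d \<Longrightarrow> rho d a \<beta> c t \<noteq> 0" "\<And>t. t < d \<Longrightarrow> rho d a (- \<beta>) c t \<noteq> 0"
  shows "bij_betw (matact d (psi d a \<beta> c)) (Ecar d) (Ecar d)"
proof (rule lower_triangular_matact_bij)
  show "psi d a \<beta> c r r \<noteq> 0" if "r \<le> d" for r
    using assms that by (simp add: psi_def psi_core_diag psi_row_scale_def psi_col_scale_def prod_zero_iff)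
qed (rule psi_above_diag)

lemma E_iso_by_psi:
  assumes "odd d" "\<And>t. t < d \<Longrightarrow> rho d a \<beta> c t \<noteq> 0" "\<And>t. t < d \<Longrightarrow> rho d a (- \<beta>) c t \<noteq> 0"
  shows "bi_iso (Ecar d) (Eact d a (- \<beta>) c) (Ecar d) (Eact d a \<beta> c)"
  unfolding bi_iso_def
proof (intro exI[of _ "matact d (psi d a \<beta> c)"] conjI ballI allI)
  show "bij_betw (matact d (psi d a \<beta> c)) (Ecar d) (Ecar d)"
    using assms(2,3) by (rule psi_matact_bij)
  show "matact d (psi d a \<beta> c) (Eact d a (- \<beta>) c g u) = Eact d a \<beta> c g (matact d (psi d a \<beta> c) u)" for g u
  proof (cases g)
    case GX
    then show ?thesis
      by (simp add: Eact_def psi_commutes_X)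
  next
    case GY
    then show ?thesis
      by (simp add: Eact_def psi_commutes_Y[OF assms(1)])
  next
    case GZ
    then show ?thesis
      by (simp only: psi_commutes_Z[OF assms(1)])
  qed
qed (simp_all add: matact_add matact_scale)

section \<open>An irreducibility criterion\<close>

lemma Ecar_top_index:
  assumes "u \<in> Ecar d" "u \<noteq> (\<lambda>_. 0)"
  obtains l where "l \<le> d" "u l \<noteq> 0" "\<forall>r>l. u r = 0"
proof -
  let ?supp = "{r. u r \<noteq> 0}"
  have bound: "?supp \<subseteq> {..d}"
    using assms(1) by (auto simp: Ecar_def not_le[symmetric])
  then have supp: "finite ?supp" "?supp \<noteq> {}"
    using assms(2) by (auto intro: finite_subset)
  show ?thesis
    using Max_in[OF supp] Max_ge[OF supp(1)] bound by (intro that[of "Max ?supp"]) (auto, meson leD mem_Collect_eq)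
qed

locale E_submodule =
  fixes d :: nat and a b c :: complex and S :: "(nat \<Rightarrow> complex) set"
  assumes subset: "S \<subseteq> Ecar d"
    and add_closed: "\<And>u v. u \<in> S \<Longrightarrow> v \<in> S \<Longrightarrow> (\<lambda>x. u x + v x) \<in> S"
    and scale_closed: "\<And>k u. u \<in> S \<Longrightarrow> (\<lambda>x. k * u x) \<in> S"
    and X_closed: "\<And>u. u \<in> S \<Longrightarrow> matact d (EXm d a) u \<in> S"
    and Y_closed: "\<And>u. u \<in> S \<Longrightarrow> matact d (EYm d a b c) u \<in> S"
    and Y_simple_spectrum: "\<And>i j. i \<le> d \<Longrightarrow> j \<le> d \<Longrightarrow> i \<noteq> j \<Longrightarrow> Eth d b i \<noteq> Eth d b j"
begin

abbreviation Y_E :: "(nat \<Rightarrow> complex) \<Rightarrow> nat \<Rightarrow> complex" where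
  "Y_E \<equiv> matact d (EYm d a b c)"

lemma vanishes_above: "u \<in> S \<Longrightarrow> d < r \<Longrightarrow> u r = 0"
  using subset by (auto simp: Ecar_def)

lemma Y_E_at_support_bound:
  assumes "v \<in> S" "v (Suc r) = 0"
  shows "Y_E v r = Eth d b r * v r"
  using assms vanishes_above[OF assms(1), of r] by (cases "r \<le> d") (simp_all add: matact_EYm matact_beyond)

lemma Y_E_at_top:
  assumes "u \<in> S" "\<forall>r>l. u r = 0" "l \<le> r"
  shows "Y_E u r = Eth d b l * u r"
  using assms Y_E_at_support_bound[OF assms(1), of r] by (cases "r = l") simp_all

text \<open>Clearing the components of \<open>(Y - \<theta>\<^sup>*\<^sub>l) u\<close> from the top down, using that \<open>Y\<close> is upper
  bidiagonal with distinct diagonal entries.\<close>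

lemma top_eigenvector_step:
  assumes u: "u \<in> S" "u l \<noteq> 0" "\<forall>r>l. u r = 0" and l: "l \<le> d"
    and res: "\<forall>r\<ge>Suc m. Y_E u r = Eth d b l * u r"
  shows "\<exists>u'\<in>S. u' l \<noteq> 0 \<and> (\<forall>r>l. u' r = 0) \<and> (\<forall>r\<ge>m. Y_E u' r = Eth d b l * u' r)"
proof -
  define v where "v = (\<lambda>x. Y_E u x + (- Eth d b l) * u x)"
  have v_apply: "v x = Y_E u x - Eth d b l * u x" for x
    by (simp add: v_def)
  have v: "v \<in> S"
    unfolding v_def using add_closed scale_closed Y_closed u(1) by blast
  have v_above: "v r = 0" if "Suc m \<le> r \<or> l \<le> r" for r
    using that res Y_E_at_top[OF u(1) u(3)] by (auto simp: v_def)
  have Yv: "Y_E v r = Eth d b r * v r" if "m \<le> r" for r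
    using that v_above by (intro Y_E_at_support_bound[OF v]) simp
  show ?thesis
  proof (cases "v m = 0")
    case True
    have "Y_E u r = Eth d b l * u r" if "m \<le> r" for r
      using that res True by (cases "r = m") (auto simp: v_def)
    with u show ?thesis
      by blast
  next
    case False
    with v_above have "m < l"
      by (meson not_le)
    with l have ne: "Eth d b m \<noteq> Eth d b l"
      by (intro Y_simple_spectrum) simp_all
    define k where "k = - 1 / (Eth d b m - Eth d b l)"
    define u' where "u' = (\<lambda>x. u x + k * v x)"
    have "u' \<in> S"
      unfolding u'_def using add_closed scale_closed u(1) v by blast
    moreover have "u' l = u l" "\<forall>r>l. u' r = 0"
      using v_above u(3) by (auto simp: u'_def)
    moreover have "Y_E u' r = Eth d b l * u' r" if "m \<le> r" for r
    proof -
      have "Y_E u' r - Eth d b l * u' r = (Y_E u r - Eth d b l * u r) + k * (Y_E v r - Eth d b l * v r)"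
        by (simp add: u'_def matact_add matact_scale algebra_simps)
      also have "\<dots> = v r * (1 + k * (Eth d b r - Eth d b l))"
        by (simp add: Yv[OF that] v_apply algebra_simps)
      also have "\<dots> = 0"
        using that v_above[of r] ne by (cases "r = m") (simp_all add: k_def)
      finally show ?thesis
        by simp
    qed
    ultimately show ?thesis
      using u(2) by metis
  qed
qed

lemma top_eigenvector:
  assumes "u \<in> S" "u l \<noteq> 0" "\<forall>r>l. u r = 0" "l \<le> d"
  shows "\<exists>w\<in>S. w l \<noteq> 0 \<and> (\<forall>r. Y_E w r = Eth d b l * w r)"
proof -
  have "\<exists>w\<in>S. w l \<noteq> 0 \<and> (\<forall>r>l. w r = 0) \<and> (\<forall>r\<ge>m. Y_E w r = Eth d b l * w r)" if "m \<le> Suc d" for m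
    using that
  proof (induction rule: inc_induct)
    case base
    show ?case
      using assms vanishes_above[OF assms(1)] by (auto simp: matact_beyond)
  next
    case (step m)
    then show ?case
      using top_eigenvector_step assms(4) by blast
  qed
  from this[of 0] show ?thesis
    by auto
qed

lemma X_raises_top:
  assumes "w \<in> S" "w n \<noteq> 0" "\<forall>r>n. w r = 0" "n < d"
  shows "\<exists>w'\<in>S. w' (Suc n) \<noteq> 0 \<and> (\<forall>r>Suc n. w' r = 0)"
proof (intro bexI conjI allI impI)
  show "matact d (EXm d a) w \<in> S"
    using X_closed[OF assms(1)] .
  show "matact d (EXm d a) w (Suc n) \<noteq> 0"
    using assms(2-4) matact_EXm[of "Suc n" d a w] by simp
  show "matact d (EXm d a) w r = 0" if "Suc n < r" for r
    using assms(3) that matact_EXm[of r d a w] by (cases "r \<le> d") (simp_all add: matact_beyond)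
qed

lemma exists_top_eigenvector:
  assumes "S \<noteq> {\<lambda>_. 0}" "(\<lambda>_. 0) \<in> S"
  shows "\<exists>w\<in>S. w \<noteq> (\<lambda>_. 0) \<and> Y_E w = (\<lambda>r. Eth d b d * w r)"
proof -
  obtain u where u: "u \<in> S" "u \<noteq> (\<lambda>_. 0)"
    using assms by blast
  then obtain l where l: "l \<le> d" "u l \<noteq> 0" "\<forall>r>l. u r = 0"
    using Ecar_top_index[of u d] subset by blast
  have "\<exists>w\<in>S. w k \<noteq> 0 \<and> (\<forall>r>k. w r = 0)" if "l \<le> k" "k \<le> d" for k
    using that
  proof (induction k rule: dec_induct)
    case (step n)
    then show ?case
      using X_raises_top by auto
  qed (use u l in blast)
  then obtain w where "w \<in> S" "w d \<noteq> 0"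
    using l(1) by blast
  then obtain w where "w \<in> S" "w d \<noteq> 0" "\<forall>r. Y_E w r = Eth d b d * w r"
    using top_eigenvector[of w d] vanishes_above by blast
  then show ?thesis
    by (auto simp: fun_eq_iff)
qed

end

lemma Y_bottom_eigenvector:
  assumes v: "v \<in> Ecar d" and dist: "\<And>r. 0 < r \<Longrightarrow> r \<le> d \<Longrightarrow> Eth d b r \<noteq> Eth d b 0"
    and eig: "matact d (EYm d a b c) v = (\<lambda>r. Eth d b 0 * v r)" and "0 < r"
  shows "v r = 0"
proof -
  have "r \<le> Suc d \<Longrightarrow> v r = 0"
  proof (induction rule: inc_induct)
    case base
    show ?case
      using v by (simp add: Ecar_def)
  next
    case (step n)
    with \<open>0 < r\<close> have "(Eth d b n - Eth d b 0) * v n = 0"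
      using fun_cong[OF eig, of n] by (auto simp: matact_EYm algebra_simps split: if_splits)
    with step.hyps \<open>0 < r\<close> dist[of n] show ?case
      by simp
  qed
  with v show ?thesis
    by (cases "r \<le> Suc d") (simp_all add: Ecar_def)
qed

lemma unit_vectors_in_X_closed:
  assumes add: "\<And>u v. u \<in> T \<Longrightarrow> v \<in> T \<Longrightarrow> (\<lambda>x. u x + v x) \<in> T"
    and scale: "\<And>k u. u \<in> T \<Longrightarrow> (\<lambda>x. k * u x) \<in> T"
    and X: "\<And>u. u \<in> T \<Longrightarrow> matact d (EXm d a) u \<in> T"
    and e0: "(\<lambda>r. if r = 0 then 1 else 0) \<in> T"
  shows "i \<le> d \<Longrightarrow> (\<lambda>r. if r = i then 1 else 0) \<in> T"
proof (induction i)
  case (Suc i)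
  let ?e = "\<lambda>i r. if r = i then (1::complex) else 0"
  have eq: "(\<lambda>x. matact d (EXm d a) (?e i) x + (- Eth d a i) * ?e i x) = ?e (Suc i)"
  proof
    fix x
    show "matact d (EXm d a) (?e i) x + (- Eth d a i) * ?e i x = ?e (Suc i) x"
      using Suc.prems by (cases "x \<le> d") (auto simp: matact_EXm matact_beyond)
  qed
  have ei: "?e i \<in> T"
    using Suc by simp
  show ?case
    unfolding eq[symmetric] by (rule add[OF X[OF ei] scale[OF ei]])
qed (use e0 in simp)

lemma Ecar_subset_if_unit_vectors:
  assumes add: "\<And>u v. u \<in> T \<Longrightarrow> v \<in> T \<Longrightarrow> (\<lambda>x. u x + v x) \<in> T"
    and scale: "\<And>k u. u \<in> T \<Longrightarrow> (\<lambda>x. k * u x) \<in> T"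
    and e: "\<And>i. i \<le> d \<Longrightarrow> (\<lambda>r. if r = i then 1 else 0) \<in> T"
  shows "Ecar d \<subseteq> T"
proof
  fix u
  assume u: "u \<in> Ecar d"
  have truncation: "(\<lambda>r. if r < m then u r else 0) \<in> T" for m
  proof (induction m)
    case (Suc m)
    have "(\<lambda>r. if r < Suc m then u r else 0) = (\<lambda>x. (if x < m then u x else 0) + u m * (if x = m then 1 else 0))"
      by (auto simp: fun_eq_iff less_Suc_eq)
    moreover have "u m = 0" if "\<not> m \<le> d"
      using u that by (simp add: Ecar_def)
    ultimately show ?case
      using add[OF Suc scale[OF e]] Suc by (cases "m \<le> d") auto
  qed (use scale[OF e[of 0], of 0] in simp)
  moreover have "(\<lambda>r. if r < Suc d then u r else 0) = u"
    using u by (auto simp: Ecar_def fun_eq_iff)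
  ultimately show "u \<in> T"
    using truncation[of "Suc d"] by simp
qed

locale E_intertwiner =
  fixes d :: nat and a b b' c :: complex and \<Phi> :: "(nat \<Rightarrow> complex) \<Rightarrow> nat \<Rightarrow> complex"
  assumes inj: "inj_on \<Phi> (Ecar d)" and into: "\<And>u. \<Phi> u \<in> Ecar d"
    and add: "\<And>u v. \<Phi> (\<lambda>x. u x + v x) = (\<lambda>y. \<Phi> u y + \<Phi> v y)"
    and scale: "\<And>k u. \<Phi> (\<lambda>x. k * u x) = (\<lambda>y. k * \<Phi> u y)"
    and X_comm: "\<And>u. u \<in> Ecar d \<Longrightarrow> \<Phi> (matact d (EXm d a) u) = matact d (EXm d a) (\<Phi> u)"
    and Y_comm: "\<And>u. u \<in> Ecar d \<Longrightarrow> \<Phi> (matact d (EYm d a b c) u) = matact d (EYm d a b' c) (\<Phi> u)"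
begin

lemma top_eigenvector_to_e0:
  assumes dist': "\<And>r. 0 < r \<Longrightarrow> r \<le> d \<Longrightarrow> Eth d b' r \<noteq> Eth d b' 0"
    and top_bottom: "Eth d b d = Eth d b' 0"
    and w: "w \<in> Ecar d" "w \<noteq> (\<lambda>_. 0)" and Yw: "matact d (EYm d a b c) w = (\<lambda>r. Eth d b d * w r)"
  shows "(\<lambda>r. if r = 0 then 1 else 0) = \<Phi> (\<lambda>x. (1 / \<Phi> w 0) * w x)"
proof -
  have "matact d (EYm d a b' c) (\<Phi> w) = \<Phi> (\<lambda>r. Eth d b d * w r)"
    using Y_comm[OF w(1)] Yw by simp
  also have "\<dots> = (\<lambda>r. Eth d b' 0 * \<Phi> w r)"
    by (simp add: scale top_bottom)
  finally have above: "\<Phi> w r = 0" if "0 < r" for r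
    using Y_bottom_eigenvector[OF into dist'] that by blast
  have "\<Phi> w 0 \<noteq> 0"
  proof
    assume "\<Phi> w 0 = 0"
    with above have "\<Phi> w = \<Phi> (\<lambda>_. 0)"
      using scale[of 0 w] by (auto simp: fun_eq_iff) (metis gr0I)
    with inj w show False
      by (auto simp: Ecar_def inj_on_def)
  qed
  with above have "(\<lambda>r. if r = 0 then 1 else 0) = (\<lambda>y. (1 / \<Phi> w 0) * \<Phi> w y)"
    by (auto simp: fun_eq_iff)
  also have "\<dots> = \<Phi> (\<lambda>x. (1 / \<Phi> w 0) * w x)"
    by (rule scale[symmetric])
  finally show ?thesis .
qed

lemma Ecar_subset_image:
  assumes "E_submodule d a b c S" and e0: "(\<lambda>r. if r = 0 then 1 else 0) \<in> \<Phi> ` S"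
  shows "Ecar d \<subseteq> \<Phi> ` S"
proof -
  interpret E_submodule d a b c S
    by (fact assms(1))
  have add_image: "(\<lambda>x. p x + q x) \<in> \<Phi> ` S" if "p \<in> \<Phi> ` S" "q \<in> \<Phi> ` S" for p q
    using that add_closed by (auto simp flip: add)
  have scale_image: "(\<lambda>x. k * p x) \<in> \<Phi> ` S" if "p \<in> \<Phi> ` S" for k p
    using that scale_closed by (auto simp flip: scale)
  have X_image: "matact d (EXm d a) p \<in> \<Phi> ` S" if "p \<in> \<Phi> ` S" for p
    using that X_closed subset by (auto simp flip: X_comm)
  have "(\<lambda>r. if r = i then 1 else 0) \<in> \<Phi> ` S" if "i \<le> d" for i
    using add_image scale_image X_image e0 that by (rule unit_vectors_in_X_closed)
  with add_image scale_image show ?thesis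
    by (rule Ecar_subset_if_unit_vectors)
qed

lemma irreducible:
  assumes dist: "\<And>i j. i \<le> d \<Longrightarrow> j \<le> d \<Longrightarrow> i \<noteq> j \<Longrightarrow> Eth d b i \<noteq> Eth d b j"
    and dist': "\<And>r. 0 < r \<Longrightarrow> r \<le> d \<Longrightarrow> Eth d b' r \<noteq> Eth d b' 0"
    and top_bottom: "Eth d b d = Eth d b' 0"
  shows "bi_irreducible (Ecar d) (Eact d a b c)"
  unfolding bi_irreducible_def
proof (intro conjI allI impI)
  have "(\<lambda>r. if r = 0 then 1 else 0) \<in> Ecar d" "(\<lambda>r::nat. if r = 0 then 1 else 0) \<noteq> (\<lambda>_. 0::complex)"
    by (auto simp: Ecar_def fun_eq_iff)
  then show "Ecar d \<noteq> {\<lambda>_. 0}"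
    by blast
  fix S
  assume "S \<subseteq> Ecar d \<and> (\<lambda>_. 0) \<in> S \<and> (\<forall>u\<in>S. \<forall>v\<in>S. (\<lambda>x. u x + v x) \<in> S)
    \<and> (\<forall>c. \<forall>u\<in>S. (\<lambda>x. c * u x) \<in> S) \<and> (\<forall>g. \<forall>u\<in>S. Eact d a b c g u \<in> S)"
  then have S0: "(\<lambda>_. 0) \<in> S" and S_act: "\<And>g u. u \<in> S \<Longrightarrow> Eact d a b c g u \<in> S"
    by auto
  with \<open>S \<subseteq> Ecar d \<and> _\<close> dist have S: "E_submodule d a b c S"
    using S_act[of _ GX] S_act[of _ GY] by unfold_locales (auto simp: Eact_def)
  then interpret E_submodule d a b c S .
  show "S = {\<lambda>_. 0} \<or> S = Ecar d"
  proof (cases "S = {\<lambda>_. 0}")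
    case False
    then obtain w where w: "w \<in> S" "w \<noteq> (\<lambda>_. 0)" "Y_E w = (\<lambda>r. Eth d b d * w r)"
      using exists_top_eigenvector S0 by blast
    then have "(\<lambda>r. if r = 0 then 1 else 0) \<in> \<Phi> ` S"
      using top_eigenvector_to_e0[OF dist' top_bottom] subset scale_closed by blast
    with S have "Ecar d \<subseteq> \<Phi> ` S"
      by (rule Ecar_subset_image)
    with subset inj into have "S = Ecar d"
      by (auto simp: inj_on_def) (metis imageE subsetD)
    then show ?thesis
      by simp
  qed simp
qed

end

section \<open>Irreducibility of \<open>W\<close> for \<open>k\<^sub>i \<ge> 0\<close>\<close>

lemma rho_nonzero_of_real:
  assumes "a + \<beta> - (of_nat d - 1) / 2 + of_nat t = complex_of_real x" "c = complex_of_real y"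
    and "x \<noteq> y" "x \<noteq> - y"
  shows "rho d a \<beta> c t \<noteq> 0"
proof (cases "odd t")
  case False
  with assms(1,2) have "rho d a \<beta> c t = complex_of_real ((x\<^sup>2 - y\<^sup>2) / 2)"
    by (simp add: rho_def)
  moreover have "(x\<^sup>2 - y\<^sup>2) / 2 \<noteq> 0"
    using assms(3,4) by (simp add: power2_eq_iff)
  ultimately show ?thesis
    by (metis of_real_eq_0_iff)
next
  case True
  have "(of_nat t + 1 :: complex) = of_nat (Suc t)"
    by simp
  then have "- (of_nat t + 1 :: complex) \<noteq> 0"
    by (simp only: neg_equal_0_iff_equal of_nat_eq_0_iff)
  with True show ?thesis
    by (simp only: rho_def if_True not_False_eq_True)
qed

lemma rho_W_nonzero:
  assumes "0 \<le> k1" "0 \<le> k2" "0 \<le> k3"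
  shows "rho n (W_a k1 k2 k3 n) (- W_b k1 k2 k3 n) (W_c k1 k2 k3 n) t \<noteq> 0"
    and "t < n \<Longrightarrow> rho n (W_a k1 k2 k3 n) (W_b k1 k2 k3 n) (W_c k1 k2 k3 n) t \<noteq> 0"
proof -
  show "rho n (W_a k1 k2 k3 n) (- W_b k1 k2 k3 n) (W_c k1 k2 k3 n) t \<noteq> 0"
    using assms
    by (intro rho_nonzero_of_real[where x = "k1 + k2 + 2 * k3 + (real n + 3) / 2 + real t"
          and y = "k1 + k2 + (real n + 1) / 2"]) (auto simp: W_a_def W_b_def W_c_def field_simps)
  show "rho n (W_a k1 k2 k3 n) (W_b k1 k2 k3 n) (W_c k1 k2 k3 n) t \<noteq> 0" if "t < n"
    using assms that
    by (intro rho_nonzero_of_real[where x = "k2 - k1 - (real n - 1) / 2 + real t"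
          and y = "k1 + k2 + (real n + 1) / 2"]) (auto simp: W_a_def W_b_def W_c_def field_simps)
qed

lemma Eth_W_b_of_real:
  "Eth n (W_b k1 k2 k3 n) r = complex_of_real ((-1) ^ r * (real r - real n - k1 - k3 - 1 / 2))"
  "Eth n (- W_b k1 k2 k3 n) r = complex_of_real ((-1) ^ r * (real r + k1 + k3 + 1 / 2))"
  by (simp_all add: Eth_def W_b_def field_simps)

lemma Eth_W_b_inj:
  assumes "0 \<le> k1" "0 \<le> k3" "i \<le> n" "j \<le> n"
    and "Eth n (W_b k1 k2 k3 n) i = Eth n (W_b k1 k2 k3 n) j"
  shows "i = j"
proof -
  have abs_eq: "\<bar>(-1) ^ r * (real r - real n - k1 - k3 - 1 / 2)\<bar> = real n + k1 + k3 + 1 / 2 - real r"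
    if "r \<le> n" for r
  proof -
    from that assms(1,2) have "real r - real n - k1 - k3 - 1 / 2 < 0"
      by simp
    then show ?thesis
      by (simp add: abs_mult power_abs)
  qed
  from assms(5) have "(-1) ^ i * (real i - real n - k1 - k3 - 1 / 2) = (-1) ^ j * (real j - real n - k1 - k3 - 1 / 2)"
    unfolding Eth_W_b_of_real of_real_eq_iff .
  with abs_eq[OF assms(3)] abs_eq[OF assms(4)] show ?thesis
    by (metis add_left_cancel diff_add_cancel of_nat_eq_iff)
qed

lemma Eth_neg_W_b_ne_0:
  assumes "0 \<le> k1" "0 \<le> k3" "0 < r"
  shows "Eth n (- W_b k1 k2 k3 n) r \<noteq> Eth n (- W_b k1 k2 k3 n) 0"
proof
  have abs_eq: "\<bar>(-1) ^ s * (real s + k1 + k3 + 1 / 2)\<bar> = real s + k1 + k3 + 1 / 2" for s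
    using assms(1,2) by (simp add: abs_mult power_abs)
  assume "Eth n (- W_b k1 k2 k3 n) r = Eth n (- W_b k1 k2 k3 n) 0"
  then have "(-1) ^ r * (real r + k1 + k3 + 1 / 2) = (-1) ^ 0 * (real 0 + k1 + k3 + 1 / 2)"
    unfolding Eth_W_b_of_real of_real_eq_iff .
  with abs_eq[of r] abs_eq[of 0] assms(3) show False
    by (metis add_right_cancel of_nat_eq_0_iff not_gr_zero)
qed

lemma Eth_W_b_top: "odd n \<Longrightarrow> Eth n (W_b k1 k2 k3 n) n = Eth n (- W_b k1 k2 k3 n) 0"
  by (simp add: Eth_W_b_of_real)
lemma W_irreducible_and_iso:
  assumes "odd n" "0 \<le> k1" "0 \<le> k2" "0 \<le> k3"
  shows "bi_irreducible (Ecar n) (Eact n (W_a k1 k2 k3 n) (W_b k1 k2 k3 n) (W_c k1 k2 k3 n))"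
    and "bi_iso (Ecar n) (Eact n (W_a k1 k2 k3 n) (W_b k1 k2 k3 n) (W_c k1 k2 k3 n))
                (Ecar n) (Eact n (W_a k1 k2 k3 n) (- W_b k1 k2 k3 n) (W_c k1 k2 k3 n))"
proof -
  let ?a = "W_a k1 k2 k3 n" and ?b = "W_b k1 k2 k3 n" and ?c = "W_c k1 k2 k3 n"
  let ?\<Phi> = "matact n (psi n ?a (- ?b) ?c)"
  have rho: "\<And>t. t < n \<Longrightarrow> rho n ?a (- ?b) ?c t \<noteq> 0" "\<And>t. t < n \<Longrightarrow> rho n ?a (- (- ?b)) ?c t \<noteq> 0"
    using rho_W_nonzero[OF assms(2-4)] by simp_all
  show "bi_iso (Ecar n) (Eact n ?a ?b ?c) (Ecar n) (Eact n ?a (- ?b) ?c)"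
    using E_iso_by_psi[OF assms(1) rho] by simp
  have bij: "bij_betw ?\<Phi> (Ecar n) (Ecar n)"
    using rho by (rule psi_matact_bij)
  interpret E_intertwiner n ?a ?b "- ?b" ?c ?\<Phi>
  proof
    show "inj_on ?\<Phi> (Ecar n)"
      using bij by (simp add: bij_betw_def)
    show "?\<Phi> (matact n (EYm n ?a ?b ?c) u) = matact n (EYm n ?a (- ?b) ?c) (?\<Phi> u)" for u
      using psi_commutes_Y[OF assms(1), of ?a "- ?b" ?c] by simp
  qed (simp_all add: matact_in_Ecar matact_add matact_scale psi_commutes_X)
  show "bi_irreducible (Ecar n) (Eact n ?a ?b ?c)"
  proof (rule irreducible)
    show "Eth n ?b i \<noteq> Eth n ?b j" if "i \<le> n" "j \<le> n" "i \<noteq> j" for i j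
      using Eth_W_b_inj[OF assms(2,4) that(1,2)] that(3) by blast
  qed (simp_all add: Eth_neg_W_b_ne_0[OF assms(2,4)] Eth_W_b_top[OF assms(1)])
qed

theorem theorem6p3:
  fixes k1 k2 k3 :: real and n :: nat
  assumes "odd n" and "1 \<le> n"
    and "ereal (real n) < min (tval k1) (min (tval k2) (tval k3))"
  shows "bi_iso (Mspace k1 k2 k3 n) (Mact k1 k2 k3)
           (dsum_car (Ecar n) (Ecar n))
           (dsum_act (Eact n (complex_of_real (k2 + k3 + (real n + 1) / 2))
                             (complex_of_real (- k1 - k3 - (real n + 1) / 2))
                             (complex_of_real (k1 + k2 + (real n + 1) / 2)))
                     (Eact n (complex_of_real (k2 + k3 + (real n + 1) / 2))
                             (complex_of_real (- k1 - k3 - (real n + 1) / 2))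
                             (complex_of_real (k1 + k2 + (real n + 1) / 2))))
       \<and> (k1 \<ge> 0 \<and> k2 \<ge> 0 \<and> k3 \<ge> 0 \<longrightarrow>
            bi_irreducible (Ecar n)
              (Eact n (complex_of_real (k2 + k3 + (real n + 1) / 2))
                      (complex_of_real (- k1 - k3 - (real n + 1) / 2))
                      (complex_of_real (k1 + k2 + (real n + 1) / 2)))
          \<and> bi_iso (Ecar n)
              (Eact n (complex_of_real (k2 + k3 + (real n + 1) / 2))
                      (complex_of_real (- k1 - k3 - (real n + 1) / 2))
                      (complex_of_real (k1 + k2 + (real n + 1) / 2)))
              (Ecar n)
              (Eact n (complex_of_real (k2 + k3 + (real n + 1) / 2))
                      (complex_of_real (k1 + k3 + (real n + 1) / 2))
                      (complex_of_real (k1 + k2 + (real n + 1) / 2))))"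
proof -
  \<comment> \<open>\<open>1 \<le> n\<close> is implied by \<open>odd n\<close>.\<close>
  from assms(3) have "ereal (real n) < tval k1" "ereal (real n) < tval k3"
    by simp_all
  then have "bi_iso (Mspace k1 k2 k3 n) (Mact k1 k2 k3) (dsum_car (Ecar n) (Ecar n))
      (dsum_act (Eact n (W_a k1 k2 k3 n) (W_b k1 k2 k3 n) (W_c k1 k2 k3 n))
                (Eact n (W_a k1 k2 k3 n) (W_b k1 k2 k3 n) (W_c k1 k2 k3 n)))"
    by (rule Mspace_iso_dsum_E[OF assms(1)])
  moreover have W: "complex_of_real (k2 + k3 + (real n + 1) / 2) = W_a k1 k2 k3 n"
    "complex_of_real (- k1 - k3 - (real n + 1) / 2) = W_b k1 k2 k3 n"
    "complex_of_real (k1 + k2 + (real n + 1) / 2) = W_c k1 k2 k3 n"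
    "complex_of_real (k1 + k3 + (real n + 1) / 2) = - W_b k1 k2 k3 n"
    by (simp_all add: W_a_def W_b_def W_c_def)
  ultimately show ?thesis
    unfolding W using W_irreducible_and_iso[OF assms(1)] by blast
qed

end
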